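(* Let $a,b>0$, $\alpha\in(0,3)$, $p>4$, and $h(x)\ge h_0>0$ on $\mathbb{Z}^3$. If $u\in H$ with $u^+\neq0$ and $u^-\neq0$, then there exists a unique pair of positive numbers $(s_u,t_u)$ such that $s_uu^++t_uu^-\in\mathcal{M}$ and $$J(s_uu^++t_uu^-)=\max_{s,t\ge0}J(su^++tu^-).$$
   Context: $\mathbb{Z}^3$ is the integer lattice graph ($x\sim y$ iff $\sum_i|x_i-y_i|=1$) with counting measure $\mu$. $|\nabla u|(x)=\big(\tfrac12\sum_{y\sim x}(u(y)-u(x))^2\big)^{1/2}$, $\int\nabla u\nabla v\,d\mu=\sum_x\tfrac12\sum_{y\sim x}(u(y)-u(x))(v(y)-v(x))$. $R_\alpha(x,y)=\frac{K_\alpha}{(2\pi)^3}\int_{\mathbb{T}^3}e^{i(x-y)\cdot k}\mu(k)^{-\alpha/2}dk$, $K_\alpha=\frac{1}{(2\pi)^3}\int_{\mathbb{T}^3}\mu(k)^{\alpha/2}dk$, $\mu(k)=6-2\sum_j\cos k_j$; $(R_\alpha\ast f)(x)=\sum_yR_\alpha(x,y)f(y)$. $H=\{u\in H^1(\mathbb{Z}^3):\sum hu^2<\infty\}$ with $\|u\|^2=\sum_x(a|\nabla u|^2+hu^2)$. $J(u)=\frac12\|u\|^2+\frac b4(\int|\nabla u|^2d\mu)^2-\frac1{2p}\int(R_\alpha\ast|u|^p)|u|^pd\mu$, $(J'(u),\phi)=\int(a\nabla u\nabla\phi+hu\phi)d\mu+b\int|\nabla u|^2d\mu\int\nabla u\nabla\phi\,d\mu-\int(R_\alpha\ast|u|^p)|u|^{p-2}u\phi\,d\mu$.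 $u^+=\max\{u,0\}$, $u^-=\min\{u,0\}$, and $\mathcal{M}=\{u\in H:u^\pm\neq0,\ (J'(u),u^+)=(J'(u),u^-)=0\}$. *)

theory Defs
  imports "HOL-Analysis.Analysis"
begin

type_synonym pt = "int \<times> int \<times> int"

definition lat_nbr :: "pt \<Rightarrow> pt \<Rightarrow> bool" where
  "lat_nbr x y \<longleftrightarrow>
     \<bar>fst x - fst y\<bar> + \<bar>fst (snd x) - fst (snd y)\<bar> + \<bar>snd (snd x) - snd (snd y)\<bar> = 1"

definition nbrs :: "pt \<Rightarrow> pt set" where
  "nbrs x = {y. lat_nbr x y}"

definition grad_sq :: "(pt \<Rightarrow> real) \<Rightarrow> pt \<Rightarrow> real" where
  "grad_sq u x = (1/2) * (\<Sum>y\<in>nbrs x. (u y - u x)^2)"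

definition grad_inner :: "(pt \<Rightarrow> real) \<Rightarrow> (pt \<Rightarrow> real) \<Rightarrow> real" where
  "grad_inner u v = (\<Sum>\<^sub>\<infinity>x. (1/2) * (\<Sum>y\<in>nbrs x. (u y - u x) * (v y - v x)))"

definition H1 :: "(pt \<Rightarrow> real) set" where
  "H1 = {u. (\<lambda>x. grad_sq u x + (u x)^2) summable_on UNIV}"

definition Hsp :: "(pt \<Rightarrow> real) \<Rightarrow> (pt \<Rightarrow> real) set" where
  "Hsp h = {u. u \<in> H1 \<and> (\<lambda>x. h x * (u x)^2) summable_on UNIV}"

definition Hnorm_sq :: "real \<Rightarrow> (pt \<Rightarrow> real) \<Rightarrow> (pt \<Rightarrow> real) \<Rightarrow> real" where
  "Hnorm_sq a h u = (\<Sum>\<^sub>\<infinity>x. a * grad_sq u x + h x * (u x)^2)"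

definition symb :: "real \<times> real \<times> real \<Rightarrow> real" where
  "symb k = 6 - 2 * (cos (fst k) + cos (fst (snd k)) + cos (snd (snd k)))"

definition torus :: "(real \<times> real \<times> real) set" where
  "torus = cbox (-pi, -pi, -pi) (pi, pi, pi)"

definition dotk :: "pt \<Rightarrow> real \<times> real \<times> real \<Rightarrow> real" where
  "dotk z k = real_of_int (fst z) * fst k + real_of_int (fst (snd z)) * fst (snd k)
              + real_of_int (snd (snd z)) * snd (snd k)"

definition K_const :: "real \<Rightarrow> real" where
  "K_const \<alpha> = (1 / (2*pi)^3) * integral torus (\<lambda>k. symb k powr (\<alpha>/2))"

text \<open>R_alpha(x,y) = K_alpha/(2pi)^3 * int_T e^{i(x-y).k} mu(k)^{-alpha/2} dk.
  The integral is complex-valued a priori; it is real by symmetry k -> -k, and we take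
  the real part.\<close>
definition R_kernel :: "real \<Rightarrow> pt \<Rightarrow> pt \<Rightarrow> real" where
  "R_kernel \<alpha> x y = Re (complex_of_real (K_const \<alpha> / (2*pi)^3) *
      integral torus (\<lambda>k. exp (\<i> * complex_of_real (dotk (x - y) k)) *
                           complex_of_real (symb k powr (-\<alpha>/2))))"

definition Rconv :: "real \<Rightarrow> (pt \<Rightarrow> real) \<Rightarrow> pt \<Rightarrow> real" where
  "Rconv \<alpha> f x = (\<Sum>\<^sub>\<infinity>y. R_kernel \<alpha> x y * f y)"

definition Jfun :: "real \<Rightarrow> real \<Rightarrow> (pt \<Rightarrow> real) \<Rightarrow> real \<Rightarrow> real \<Rightarrow> (pt \<Rightarrow> real) \<Rightarrow> real" where
  "Jfun a b h \<alpha> p u =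
     (1/2) * Hnorm_sq a h u + (b/4) * (\<Sum>\<^sub>\<infinity>x. grad_sq u x)^2
     - (1/(2*p)) * (\<Sum>\<^sub>\<infinity>x. Rconv \<alpha> (\<lambda>y. \<bar>u y\<bar> powr p) x * \<bar>u x\<bar> powr p)"

definition Jder :: "real \<Rightarrow> real \<Rightarrow> (pt \<Rightarrow> real) \<Rightarrow> real \<Rightarrow> real \<Rightarrow> (pt \<Rightarrow> real) \<Rightarrow> (pt \<Rightarrow> real) \<Rightarrow> real" where
  "Jder a b h \<alpha> p u \<phi> =
     a * grad_inner u \<phi> + (\<Sum>\<^sub>\<infinity>x. h x * u x * \<phi> x)
     + b * (\<Sum>\<^sub>\<infinity>x. grad_sq u x) * grad_inner u \<phi>
     - (\<Sum>\<^sub>\<infinity>x. Rconv \<alpha> (\<lambda>y. \<bar>u y\<bar> powr p) x * \<bar>u x\<bar> powr (p - 2) * u x * \<phi> x)"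

definition posp :: "(pt \<Rightarrow> real) \<Rightarrow> pt \<Rightarrow> real" where
  "posp u = (\<lambda>x. max (u x) 0)"

definition negp :: "(pt \<Rightarrow> real) \<Rightarrow> pt \<Rightarrow> real" where
  "negp u = (\<lambda>x. min (u x) 0)"

definition Nehari_sc :: "real \<Rightarrow> real \<Rightarrow> (pt \<Rightarrow> real) \<Rightarrow> real \<Rightarrow> real \<Rightarrow> (pt \<Rightarrow> real) set" where
  "Nehari_sc a b h \<alpha> p = {u. u \<in> Hsp h \<and> posp u \<noteq> (\<lambda>_. 0) \<and> negp u \<noteq> (\<lambda>_. 0)
      \<and> Jder a b h \<alpha> p u (posp u) = 0 \<and> Jder a b h \<alpha> p u (negp u) = 0}"

end

theory Submission
  imports Defs
begin

(* Since u^+ and u^- have disjoint supports, for s, t >= 0 the value J(s u^+ + t u^-) is an explicit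
   function of (s, t),
     (a G(s,t) + Q1 s^2 + Q2 t^2)/2 + b/4 G(s,t)^2 - (A s^(2p) + 2 C s^p t^p + D t^(2p))/(2p),
   with G a quadratic form with nonnegative coefficients, and the two Nehari conditions say that
   s d/ds and t d/dt of it vanish.  Writing the Riesz kernel as a Fourier integral against the weight
   mu(k)^(-alpha/2), which is positive and, because alpha < 3, integrable on the torus, shows that the
   kernel is positive definite; hence A, D > 0 and C^2 < A D.

   Since p > 4 the nonlinear term dominates at infinity, so the function attains its maximum on the
   closed quadrant.  On an axis it still increases in the missing variable, so the maximum is interior
   and satisfies both Nehari equations.  For uniqueness, take the coordinatewise power mean
   ((s1^p + s2^p)/2)^(1/p) of two maximisers: the monomials of degree 2 and 4 < p are concave in
   (s^p, t^p), strictly so for s^2 and t^2, while the nonlinear term is a convex quadratic form in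
   (s^p, t^p); so the power mean would give a strictly larger value. *)

section \<open>Power means\<close>

lemma weighted_am_gm_powr:
  fixes \<alpha> \<beta> u v :: real
  assumes "0 \<le> \<alpha>" "0 \<le> \<beta>" "\<alpha> + \<beta> \<le> 1" "0 < u" "0 < v"
  shows "u powr \<alpha> * v powr \<beta> \<le> \<alpha> * u + \<beta> * v + (1 - \<alpha> - \<beta>)"
proof (cases "\<alpha> + \<beta> = 0")
  case True
  then have "\<alpha> = 0" "\<beta> = 0" using assms by auto
  then show ?thesis by simp
next
  case False
  define \<gamma> where "\<gamma> = \<alpha> + \<beta>"
  have \<gamma>: "0 < \<gamma>" "\<gamma> \<le> 1" using False assms by (auto simp: \<gamma>_def)
  define z where "z = (\<alpha>/\<gamma>) * u + (\<beta>/\<gamma>) * v"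
  have young: "u powr (\<alpha>/\<gamma>) * v powr (\<beta>/\<gamma>) \<le> z"
    unfolding z_def using assms \<gamma>
    by (intro Youngs_inequality_0) (auto simp: \<gamma>_def add_divide_distrib[symmetric])
  have "0 < u powr (\<alpha>/\<gamma>) * v powr (\<beta>/\<gamma>)" using assms by simp
  then have z: "0 < z" using young by linarith
  have "u powr \<alpha> * v powr \<beta> = (u powr (\<alpha>/\<gamma>) * v powr (\<beta>/\<gamma>)) powr \<gamma>"
    using \<gamma> assms by (simp add: powr_mult powr_powr)
  also have "\<dots> \<le> z powr \<gamma> * 1 powr (1 - \<gamma>)"
    using young \<gamma> by (simp add: powr_mono2)
  also have "\<dots> \<le> \<gamma> * z + (1 - \<gamma>) * 1"
    using \<gamma> z by (intro Youngs_inequality_0) auto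
  also have "\<gamma> * z = \<alpha> * u + \<beta> * v" unfolding z_def using \<gamma> by (simp add: field_simps)
  finally show ?thesis by (simp add: \<gamma>_def)
qed

lemma powr_mult_powr_midpoint_le:
  fixes \<alpha> \<beta> x1 x2 y1 y2 :: real
  assumes "0 \<le> \<alpha>" "0 \<le> \<beta>" "\<alpha> + \<beta> \<le> 1" "0 < x1" "0 < x2" "0 < y1" "0 < y2"
  shows "x1 powr \<alpha> * y1 powr \<beta> + x2 powr \<alpha> * y2 powr \<beta>
         \<le> 2 * (((x1 + x2)/2) powr \<alpha> * ((y1 + y2)/2) powr \<beta>)"
proof -
  define m n where "m = (x1 + x2)/2" and "n = (y1 + y2)/2"
  have mn: "0 < m" "0 < n" using assms by (auto simp: m_def n_def)
  have scale: "x powr \<alpha> * y powr \<beta> = (m powr \<alpha> * n powr \<beta>) * ((x/m) powr \<alpha> * (y/n) powr \<beta>)"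
    if "x > 0" "y > 0" for x y
    using mn that by (simp add: powr_divide)
  have sums: "x1/m + x2/m = 2" "y1/n + y2/n = 2"
    using mn by (simp_all add: add_divide_distrib[symmetric] m_def n_def field_simps)
  have "(x1/m) powr \<alpha> * (y1/n) powr \<beta> + (x2/m) powr \<alpha> * (y2/n) powr \<beta>
      \<le> (\<alpha> * (x1/m) + \<beta> * (y1/n) + (1 - \<alpha> - \<beta>)) + (\<alpha> * (x2/m) + \<beta> * (y2/n) + (1 - \<alpha> - \<beta>))"
    using assms mn by (intro add_mono weighted_am_gm_powr) auto
  also have "\<dots> = \<alpha> * (x1/m + x2/m) + \<beta> * (y1/n + y2/n) + 2 * (1 - \<alpha> - \<beta>)"
    by (simp add: algebra_simps)
  also have "\<dots> = 2" using sums by simp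
  finally have "m powr \<alpha> * n powr \<beta> * ((x1/m) powr \<alpha> * (y1/n) powr \<beta> + (x2/m) powr \<alpha> * (y2/n) powr \<beta>)
      \<le> m powr \<alpha> * n powr \<beta> * 2"
    by (simp add: mult_left_mono)
  then show ?thesis
    using scale[of x1 y1] scale[of x2 y2] assms by (simp add: m_def n_def algebra_simps)
qed

text \<open>Apply Young's inequality to \<open>sqrt a\<close> and square.\<close>
lemma powr_lt_tangent_line:
  fixes q a :: real
  assumes "0 < q" "q < 1" "0 \<le> a" "a \<noteq> 1"
  shows "a powr q < 1 + q * (a - 1)"
proof (cases "a = 0")
  case True
  then show ?thesis using assms by simp
next
  case False
  define c where "c = sqrt a"
  have c: "0 < c" "c \<noteq> 1" "c * c = a" using assms False by (auto simp: c_def)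
  have young: "c powr q \<le> q * c + (1 - q)"
    using Youngs_inequality_0[of q "1 - q" c 1] c assms by simp
  have "a powr q = c powr q * c powr q"
    using c by (metis powr_mult)
  also have "\<dots> \<le> (q * c + (1 - q)) * (q * c + (1 - q))"
    using young assms c(1) by (intro mult_mono) (auto intro: add_nonneg_nonneg)
  also have "\<dots> < 1 + q * (a - 1)"
  proof -
    have "0 < (c - 1)^2" using c(2) by simp
    then have "0 < q * (1 - q) * (c - 1)^2" using assms by simp
    then show ?thesis unfolding c(3)[symmetric] by (simp add: algebra_simps power2_eq_square)
  qed
  finally show ?thesis .
qed

lemma powr_midpoint_strict:
  fixes q x y :: real
  assumes "0 < q" "q < 1" "0 \<le> x" "0 \<le> y" "x \<noteq> y"
  shows "x powr q + y powr q < 2 * ((x + y)/2) powr q"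
proof -
  define m where "m = (x + y)/2"
  have m: "0 < m" using assms by (auto simp: m_def)
  have sum: "x/m + y/m = 2" using m by (simp add: add_divide_distrib[symmetric] m_def field_simps)
  have "x/m \<noteq> 1" "y/m \<noteq> 1" using assms m by (auto simp: m_def field_simps)
  then have "(x/m) powr q + (y/m) powr q < (1 + q * (x/m - 1)) + (1 + q * (y/m - 1))"
    using assms m by (intro add_strict_mono powr_lt_tangent_line) auto
  also have "\<dots> = 2 + q * (x/m + y/m - 2)" by (simp add: algebra_simps)
  also have "\<dots> = 2" using sum by simp
  finally have lt: "(x/m) powr q + (y/m) powr q < 2" .
  have scale: "z powr q = m powr q * (z/m) powr q" if "0 \<le> z" for z
    using m that by (simp add: powr_divide)
  have "x powr q + y powr q = m powr q * ((x/m) powr q + (y/m) powr q)"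
    using scale[of x] scale[of y] assms by (simp add: algebra_simps)
  also have "\<dots> < m powr q * 2" using lt m by simp
  finally show ?thesis by (simp add: m_def mult.commute)
qed

definition power_mean :: "real \<Rightarrow> real \<Rightarrow> real \<Rightarrow> real" where
  "power_mean p x y = ((x powr p + y powr p)/2) powr (1/p)"

lemma power_mean_pos: "0 < x \<Longrightarrow> 0 < y \<Longrightarrow> 0 < power_mean p x y"
proof -
  assume "0 < x" "0 < y"
  then have "0 < x powr p + y powr p" by (simp add: add_pos_pos)
  then show ?thesis unfolding power_mean_def by simp
qed

lemma power_mean_powr:
  "0 < p \<Longrightarrow> 0 < x \<Longrightarrow> 0 < y \<Longrightarrow> power_mean p x y powr p = (x powr p + y powr p)/2"
  unfolding power_mean_def by (simp add: powr_powr add_pos_pos)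

lemma power_mean_power:
  assumes "0 < p" "0 < x" "0 < y"
  shows "power_mean p x y ^ i = ((x powr p + y powr p)/2) powr (real i / p)"
proof -
  have "0 < (x powr p + y powr p)/2" using assms by (simp add: add_pos_pos)
  then show ?thesis unfolding power_mean_def by (simp add: powr_realpow[symmetric] powr_powr)
qed

lemma monomial_le_power_mean:
  fixes p s1 s2 t1 t2 :: real and i j :: nat
  assumes p: "0 < p" and ij: "real i + real j \<le> p" and pos: "0 < s1" "0 < s2" "0 < t1" "0 < t2"
  shows "s1^i * t1^j + s2^i * t2^j \<le> 2 * (power_mean p s1 s2 ^ i * power_mean p t1 t2 ^ j)"
proof -
  have pow: "(x powr p) powr (real k / p) = x ^ k" if "0 < x" for x :: real and k
    using p that by (simp add: powr_powr powr_realpow)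
  have "real i / p + real j / p \<le> 1" using ij p by (simp add: add_divide_distrib[symmetric])
  then have "(s1 powr p) powr (real i / p) * (t1 powr p) powr (real j / p)
      + (s2 powr p) powr (real i / p) * (t2 powr p) powr (real j / p)
      \<le> 2 * (((s1 powr p + s2 powr p)/2) powr (real i / p) * ((t1 powr p + t2 powr p)/2) powr (real j / p))"
    using p pos by (intro powr_mult_powr_midpoint_le) auto
  then show ?thesis using p pos by (simp only: pow power_mean_power)
qed

lemma square_lt_power_mean:
  fixes p s1 s2 :: real
  assumes p: "2 < p" and pos: "0 < s1" "0 < s2" and ne: "s1 \<noteq> s2"
  shows "s1^2 + s2^2 < 2 * power_mean p s1 s2 ^ 2"
proof -
  have "s1 powr p \<noteq> s2 powr p"
  proof
    assume "s1 powr p = s2 powr p"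
    then have "(s1 powr p) powr (1/p) = (s2 powr p) powr (1/p)" by simp
    then show False using ne pos p by (simp add: powr_powr)
  qed
  then have "(s1 powr p) powr (2 / p) + (s2 powr p) powr (2 / p)
       < 2 * ((s1 powr p + s2 powr p)/2) powr (2 / p)"
    using p pos by (intro powr_midpoint_strict) auto
  then show ?thesis
    using p pos power_mean_power[of p s1 s2 2] by (simp add: powr_powr powr_realpow)
qed

section \<open>The fibering map on the positive quadrant\<close>

definition qform :: "real \<Rightarrow> real \<Rightarrow> real \<Rightarrow> real \<Rightarrow> real \<Rightarrow> real" where
  "qform A C D x y = A * x^2 + 2 * C * (x * y) + D * y^2"

lemma qform_swap: "qform A C D x y = qform D C A y x"
  unfolding qform_def by (simp add: algebra_simps)

lemma qform_ge:
  assumes "0 < A" "0 < D" "C * C < A * D"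
  shows "(A * D - C * C) / (A + D) * (x^2 + y^2) \<le> qform A C D x y"
proof -
  have "(A + D) * qform A C D x y - (A * D - C * C) * (x^2 + y^2)
        = (A * x + C * y)^2 + (C * x + D * y)^2"
    unfolding qform_def by (simp add: algebra_simps power2_eq_square)
  then have "(A * D - C * C) * (x^2 + y^2) \<le> (A + D) * qform A C D x y"
    by (smt (verit) zero_le_power2)
  then show ?thesis using assms by (simp add: pos_divide_le_eq mult.commute)
qed

lemma qform_midpoint:
  "qform A C D x1 y1 + qform A C D x2 y2
     = 2 * qform A C D ((x1 + x2)/2) ((y1 + y2)/2) + qform A C D (x1 - x2) (y1 - y2) / 2"
  unfolding qform_def by (simp add: power2_eq_square algebra_simps add_divide_distrib diff_divide_distrib)

text \<open>With \<open>w = s u\<^sup>+ + t u\<^sup>-\<close>, \<open>J w\<close> is \<open>fibre_J\<close> evaluated at the pairings of \<open>u\<^sup>+\<close> and \<open>u\<^sup>-\<close>: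
  \<open>g\<close> for the gradients, \<open>Q\<close> for the potential \<open>h\<close>, \<open>A, C, D\<close> for the Riesz kernel applied to
  \<open>|u\<^sup>\<plusminus>|\<^sup>p\<close>. Then \<open>fibre_nehari\<close> is \<open>(J'(w), w\<^sup>+) = s \<partial>\<^sub>s J(w)\<close>.\<close>
definition fibre_J ::
    "real \<Rightarrow> real \<Rightarrow> real \<Rightarrow> real \<Rightarrow> real \<Rightarrow> real \<Rightarrow> real \<Rightarrow> real \<Rightarrow> real \<Rightarrow> real \<Rightarrow> real
      \<Rightarrow> real \<Rightarrow> real \<Rightarrow> real" where
  "fibre_J a b p g1 g12 g2 Q1 Q2 A C D s t =
     (a * qform g1 g12 g2 s t + Q1 * s^2 + Q2 * t^2) / 2 + b / 4 * (qform g1 g12 g2 s t)^2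
     - qform A C D (s powr p) (t powr p) / (2 * p)"

definition fibre_nehari ::
    "real \<Rightarrow> real \<Rightarrow> real \<Rightarrow> real \<Rightarrow> real \<Rightarrow> real \<Rightarrow> real \<Rightarrow> real \<Rightarrow> real \<Rightarrow> real \<Rightarrow> real
      \<Rightarrow> real \<Rightarrow> real \<Rightarrow> real" where
  "fibre_nehari a b p g1 g12 g2 Q1 Q2 A C D s t =
     a * (g1 * s^2 + g12 * (s * t)) + Q1 * s^2 + b * qform g1 g12 g2 s t * (g1 * s^2 + g12 * (s * t))
     - (A * (s powr p)^2 + C * (s powr p * t powr p))"

lemma fibre_J_swap:
  "fibre_J a b p g1 g12 g2 Q1 Q2 A C D s t = fibre_J a b p g2 g12 g1 Q2 Q1 D C A t s"
  unfolding fibre_J_def qform_swap[of g1 g12 g2] qform_swap[of A C D] by (simp add: algebra_simps)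

locale fibre =
  fixes a b p g1 g12 g2 Q1 Q2 A C D :: real
  assumes a: "0 < a" and b: "0 < b" and p: "4 < p"
    and g1: "0 \<le> g1" and g12: "0 \<le> g12" and g2: "0 \<le> g2"
    and Q1: "0 < Q1" and Q2: "0 < Q2" and A: "0 < A" and D: "0 < D" and AD: "C * C < A * D"
begin

abbreviation F where "F \<equiv> fibre_J a b p g1 g12 g2 Q1 Q2 A C D"
abbreviation G where "G \<equiv> qform g1 g12 g2"
abbreviation N where "N \<equiv> qform A C D"

lemma fibre_swap: "fibre a b p g2 g12 g1 Q2 Q1 D C A"
  using a b p g1 g12 g2 Q1 Q2 A D AD by unfold_locales (auto simp: mult.commute)

definition "ell = (A * D - C * C) / (A + D)"

lemma ell_pos: "0 < ell"
  unfolding ell_def using AD A D by simp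

lemma N_ge: "ell * (x^2 + y^2) \<le> N x y"
  unfolding ell_def using qform_ge[OF A D AD] .

lemma G_nonneg: "0 \<le> s \<Longrightarrow> 0 \<le> t \<Longrightarrow> 0 \<le> G s t"
  unfolding qform_def using g1 g12 g2 by simp

lemma fibre_J_zero: "F 0 0 = 0"
  unfolding fibre_J_def qform_def using p by simp

definition "growth = (a * (g1 + 2 * g12 + g2) + Q1 + Q2) / 2 + b / 4 * (g1 + 2 * g12 + g2)^2"

lemma growth_pos: "0 < growth"
proof -
  have "0 \<le> a * (g1 + 2 * g12 + g2)" using a g1 g12 g2 by simp
  then have "0 < a * (g1 + 2 * g12 + g2) + Q1 + Q2" using Q1 Q2 by linarith
  then show ?thesis unfolding growth_def using b by (simp add: add_pos_nonneg)
qed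

lemma fibre_J_le:
  assumes st: "0 \<le> s" "0 \<le> t" and m: "1 \<le> max s t"
  shows "F s t \<le> growth * max s t ^ 4 - ell / (2 * p) * max s t powr (2 * p)"
proof -
  define m where "m = max s t"
  define gs where "gs = g1 + 2 * g12 + g2"
  have m1: "1 \<le> m" using m by (simp add: m_def)
  have sq: "s^2 \<le> m^2" "t^2 \<le> m^2" "s * t \<le> m^2"
    using st by (auto simp: m_def power2_eq_square intro: mult_mono)
  have "g1 * s^2 \<le> g1 * m^2" "g12 * (s * t) \<le> g12 * m^2" "g2 * t^2 \<le> g2 * m^2"
    using sq g1 g12 g2 by (auto intro: mult_left_mono)
  then have G: "0 \<le> G s t" "G s t \<le> gs * m^2"
    using G_nonneg[OF st] unfolding qform_def gs_def by (auto simp: algebra_simps)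
  have m24: "m^2 \<le> m^4" using m1 by (simp add: power_increasing)
  have "a * G s t \<le> a * (gs * m^2)" "Q1 * s^2 \<le> Q1 * m^2" "Q2 * t^2 \<le> Q2 * m^2"
    using G(2) sq a Q1 Q2 by auto
  then have "a * G s t + Q1 * s^2 + Q2 * t^2 \<le> (a * gs + Q1 + Q2) * m^2"
    by (simp add: algebra_simps)
  also have "\<dots> \<le> (a * gs + Q1 + Q2) * m^4"
    using m24 a Q1 Q2 g1 g12 g2 by (intro mult_left_mono) (auto simp: gs_def)
  finally have quad: "(a * G s t + Q1 * s^2 + Q2 * t^2) / 2 \<le> (a * gs + Q1 + Q2) / 2 * m^4"
    by simp
  have "(G s t)^2 \<le> (gs * m^2)^2" using G by (intro power_mono) auto
  then have quart: "b / 4 * (G s t)^2 \<le> b / 4 * gs^2 * m^4"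
    using b by (simp add: power_mult_distrib flip: power_mult)
  have "(m powr p)^2 \<le> (s powr p)^2 + (t powr p)^2"
    by (cases "s \<le> t") (auto simp: m_def max_def)
  then have "ell * (m powr p)^2 \<le> N (s powr p) (t powr p)"
    using N_ge[of "s powr p" "t powr p"] ell_pos by (meson mult_left_mono less_imp_le order_trans)
  moreover have "(m powr p)^2 = m powr (2 * p)"
    using m1 by (simp add: power2_eq_square powr_add[symmetric])
  ultimately have "ell / (2 * p) * m powr (2 * p) \<le> N (s powr p) (t powr p) / (2 * p)"
    using p by (simp add: divide_right_mono)
  moreover have "growth * m^4 = (a * gs + Q1 + Q2) / 2 * m^4 + b / 4 * gs^2 * m^4"
    unfolding growth_def gs_def by (simp add: algebra_simps)
  ultimately show ?thesis
    using quad quart unfolding fibre_J_def m_def[symmetric] by linarith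
qed

lemma fibre_J_neg_far: "\<exists>R\<ge>1. \<forall>s t. 0 \<le> s \<longrightarrow> 0 \<le> t \<longrightarrow> (R < s \<or> R < t) \<longrightarrow> F s t < 0"
proof -
  define K where "K = 2 * p * growth / ell"
  have K: "0 < K" unfolding K_def using p ell_pos growth_pos by simp
  define R where "R = max 1 (K powr (1 / (2 * p - 4)))"
  have "F s t < 0" if st: "0 \<le> s" "0 \<le> t" "R < s \<or> R < t" for s t
  proof -
    define m where "m = max s t"
    have m: "R < m" "1 < m" using st by (auto simp: m_def R_def)
    have "K = (K powr (1 / (2 * p - 4))) powr (2 * p - 4)"
      using K p by (simp add: powr_powr)
    also have "\<dots> < m powr (2 * p - 4)"
      using m p by (intro powr_less_mono2) (auto simp: R_def)
    finally have "growth * m^4 < ell / (2 * p) * (m^4 * m powr (2 * p - 4))"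
      using m p ell_pos by (simp add: K_def field_simps)
    also have "m^4 * m powr (2 * p - 4) = m powr (2 * p)"
    proof -
      have "m powr (2 * p) = m powr 4 * m powr (2 * p - 4)" by (simp add: powr_add[symmetric])
      also have "m powr 4 = m^4" using m by (simp add: powr_numeral)
      finally show ?thesis by simp
    qed
    finally show ?thesis
      using fibre_J_le[of s t] st m by (simp add: m_def)
  qed
  then show ?thesis by (intro exI[of _ R]) (auto simp: R_def)
qed

lemma fibre_J_continuous_on:
  assumes "\<forall>z\<in>S. 0 \<le> fst z \<and> 0 \<le> snd z"
  shows "continuous_on S (\<lambda>z. F (fst z) (snd z))"
proof -
  have s: "continuous_on S (\<lambda>z. fst z powr p)"
    by (rule continuous_on_powr'[OF continuous_on_fst[OF continuous_on_id] continuous_on_const])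
      (use assms p in auto)
  have t: "continuous_on S (\<lambda>z. snd z powr p)"
    by (rule continuous_on_powr'[OF continuous_on_snd[OF continuous_on_id] continuous_on_const])
      (use assms p in auto)
  show ?thesis unfolding fibre_J_def qform_def
    by (intro continuous_on_add continuous_on_diff continuous_on_mult continuous_on_divide
        continuous_on_power s t continuous_on_const continuous_on_fst continuous_on_snd continuous_on_id)
      (use p in auto)
qed

lemma fibre_J_attains_max:
  "\<exists>s0 t0. 0 \<le> s0 \<and> 0 \<le> t0 \<and> (\<forall>s t. 0 \<le> s \<longrightarrow> 0 \<le> t \<longrightarrow> F s t \<le> F s0 t0)"
proof -
  obtain R where R: "1 \<le> R" "\<And>s t. 0 \<le> s \<Longrightarrow> 0 \<le> t \<Longrightarrow> R < s \<or> R < t \<Longrightarrow> F s t < 0"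
    using fibre_J_neg_far by blast
  let ?S = "cbox (0::real, 0::real) (R, R)"
  have S: "z \<in> ?S \<longleftrightarrow> 0 \<le> fst z \<and> fst z \<le> R \<and> 0 \<le> snd z \<and> snd z \<le> R" for z
    by (cases z) (auto simp: cbox_Pair_iff)
  have "(0, 0) \<in> ?S" using R S[of "(0, 0)"] by simp
  then have ne: "?S \<noteq> {}" by blast
  have cont: "continuous_on ?S (\<lambda>z. F (fst z) (snd z))"
    using S by (intro fibre_J_continuous_on) auto
  obtain z0 where z0: "z0 \<in> ?S" "\<forall>z\<in>?S. F (fst z) (snd z) \<le> F (fst z0) (snd z0)"
    using continuous_attains_sup[OF compact_cbox ne cont] by (elim bexE)
  have "0 \<le> F (fst z0) (snd z0)"
    using bspec[OF z0(2) \<open>(0, 0) \<in> ?S\<close>] fibre_J_zero by simp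
  have "F s t \<le> F (fst z0) (snd z0)" if "0 \<le> s" "0 \<le> t" for s t
  proof (cases "s \<le> R \<and> t \<le> R")
    case True
    then show ?thesis using bspec[OF z0(2), of "(s, t)"] that S by simp
  next
    case False
    then show ?thesis using R(2)[OF that] \<open>0 \<le> F (fst z0) (snd z0)\<close> by fastforce
  qed
  moreover have "0 \<le> fst z0" "0 \<le> snd z0" using z0(1) S by auto
  ultimately show ?thesis by blast
qed

lemma N_increment_le:
  assumes "0 < \<tau>" "\<tau> \<le> 1"
  shows "N (s powr p) (\<tau> powr p) - N (s powr p) 0 \<le> (2 * \<bar>C\<bar> * s powr p + D) * \<tau>^3"
proof -
  have "\<tau> powr p \<le> \<tau> powr 3" using assms p by (intro powr_mono') auto
  then have \<tau>p: "\<tau> powr p \<le> \<tau>^3" using assms by (simp add: powr_realpow)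
  moreover have "\<tau>^3 \<le> 1" using assms by (simp add: power_le_one)
  ultimately have "(\<tau> powr p)^2 \<le> \<tau>^3"
    unfolding power2_eq_square by (meson mult_left_le_one_le order_trans powr_ge_zero)
  then have D_term: "D * (\<tau> powr p)^2 \<le> D * \<tau>^3" using D by simp
  have "C * (s powr p * \<tau> powr p) \<le> \<bar>C\<bar> * (s powr p * \<tau> powr p)"
    by (simp add: mult_right_mono)
  also have "\<dots> \<le> \<bar>C\<bar> * (s powr p * \<tau>^3)"
    using \<tau>p by (simp add: mult_left_mono)
  finally have C_term: "C * (s powr p * \<tau> powr p) \<le> \<bar>C\<bar> * (s powr p * \<tau>^3)" .
  have "N (s powr p) (\<tau> powr p) - N (s powr p) 0 = 2 * (C * (s powr p * \<tau> powr p)) + D * (\<tau> powr p)^2"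
    unfolding qform_def by (simp add: algebra_simps)
  also have "\<dots> \<le> 2 * (\<bar>C\<bar> * (s powr p * \<tau>^3)) + D * \<tau>^3"
    using C_term D_term by linarith
  also have "\<dots> = (2 * \<bar>C\<bar> * s powr p + D) * \<tau>^3" by (simp add: algebra_simps)
  finally show ?thesis .
qed

text \<open>On an axis \<open>F\<close> grows in the missing direction: the gain \<open>Q\<^sub>2 \<tau>\<^sup>2 / 2\<close> beats the nonlinear loss,
  which is \<open>O(\<tau>\<^sup>3)\<close> since \<open>p > 3\<close>.\<close>
lemma fibre_J_gain_off_axis:
  assumes s: "0 \<le> s"
  shows "\<exists>\<tau>>0. F s 0 < F s \<tau>"
proof -
  define K where "K = (2 * \<bar>C\<bar> * s powr p + D) / (2 * p)"
  have K: "0 < K" unfolding K_def using D p by (simp add: add_nonneg_pos)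
  define \<tau> where "\<tau> = min (1/2) (Q2 / (4 * K))"
  have \<tau>: "0 < \<tau>" "\<tau> \<le> 1" "K * \<tau> \<le> Q2 / 4"
    using K Q2 by (auto simp: \<tau>_def min_def field_simps)
  have nl: "(N (s powr p) (\<tau> powr p) - N (s powr p) 0) / (2 * p) \<le> K * \<tau> * \<tau>^2"
    using N_increment_le[OF \<tau>(1,2), of s] p
    by (simp add: K_def divide_right_mono power3_eq_cube power2_eq_square mult.assoc)
  have "G s 0 \<le> G s \<tau>" "0 \<le> G s 0"
    unfolding qform_def using g1 g12 g2 s \<tau> by auto
  then have x: "0 \<le> a * (G s \<tau> - G s 0)" and y: "0 \<le> b / 4 * ((G s \<tau>)^2 - (G s 0)^2)"
    using a b by (auto intro: power_mono)
  have "K * \<tau> * \<tau>^2 \<le> Q2 / 4 * \<tau>^2" using \<tau> by (intro mult_right_mono) auto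
  then have k: "K * \<tau> * \<tau>^2 < Q2 * \<tau>^2 / 2" using Q2 \<tau> by simp
  have arith: "0 < (x + q) / 2 + y - n" if "0 \<le> x" "0 \<le> y" "n \<le> k" "k < q / 2" for x y n k q :: real
    using that by argo
  have "F s \<tau> - F s 0 = (a * (G s \<tau> - G s 0) + Q2 * \<tau>^2) / 2
      + b / 4 * ((G s \<tau>)^2 - (G s 0)^2) - (N (s powr p) (\<tau> powr p) - N (s powr p) 0) / (2 * p)"
    unfolding fibre_J_def by (simp add: algebra_simps diff_divide_distrib add_divide_distrib)
  also have "\<dots> > 0" by (rule arith[OF x y nl k])
  finally show ?thesis using \<tau> by auto
qed

lemma fibre_J_max_second_pos:
  assumes st0: "0 \<le> s0" "0 \<le> t0" and max: "\<forall>s t. 0 \<le> s \<longrightarrow> 0 \<le> t \<longrightarrow> F s t \<le> F s0 t0"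
  shows "0 < t0"
proof (rule ccontr)
  assume "\<not> 0 < t0"
  then have "t0 = 0" using st0 by simp
  obtain \<tau> where "0 < \<tau>" "F s0 0 < F s0 \<tau>" using fibre_J_gain_off_axis[OF st0(1)] by blast
  moreover have "F s0 \<tau> \<le> F s0 t0" using max st0(1) \<open>0 < \<tau>\<close> by simp
  ultimately show False using \<open>t0 = 0\<close> by simp
qed


lemma fibre_nehari_at_max:
  assumes s0: "0 < s0" and t0: "0 \<le> t0"
    and max: "\<forall>s t. 0 \<le> s \<longrightarrow> 0 \<le> t \<longrightarrow> F s t \<le> F s0 t0"
  shows "fibre_nehari a b p g1 g12 g2 Q1 Q2 A C D s0 t0 = 0"
proof -
  define \<phi> where "\<phi> r = (1/2) * (a * (g1 * (r * s0)^2 + 2 * g12 * ((r * s0) * t0) + g2 * t0^2)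
      + Q1 * (r * s0)^2 + Q2 * t0^2) + (b/4) * (g1 * (r * s0)^2 + 2 * g12 * ((r * s0) * t0) + g2 * t0^2)^2
      - (1/(2*p)) * (A * (r powr p * s0 powr p)^2 + 2 * C * ((r powr p * s0 powr p) * t0 powr p)
      + D * (t0 powr p)^2)" for r
  have \<phi>: "\<phi> r = F (r * s0) t0" if "0 < r" for r
    unfolding \<phi>_def fibre_J_def qform_def using that s0 by (simp add: powr_mult)
  have "(\<phi> has_real_derivative fibre_nehari a b p g1 g12 g2 Q1 Q2 A C D s0 t0) (at 1)"
    unfolding \<phi>_def fibre_nehari_def qform_def
    apply (rule derivative_eq_intros has_real_derivative_powr refl | simp)+
    using p apply (simp add: field_simps power2_eq_square)
    done
  then show ?thesis
  proof (rule DERIV_local_max)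
    show "\<forall>r. \<bar>1 - r\<bar> < 1 \<longrightarrow> \<phi> r \<le> \<phi> 1"
    proof (intro allI impI)
      fix r :: real
      assume "\<bar>1 - r\<bar> < 1"
      then have "0 < r" by simp
      then show "\<phi> r \<le> \<phi> 1" using \<phi>[of r] \<phi>[of 1] max s0 t0 by simp
    qed
  qed simp
qed

definition "P s t = (a * G s t + Q1 * s^2 + Q2 * t^2) / 2 + b / 4 * (G s t)^2"

lemma fibre_J_eq_P: "F s t = P s t - N (s powr p) (t powr p) / (2 * p)"
  unfolding fibre_J_def P_def ..

lemma P_expand:
  "P s t = ((a * g1 + Q1) * (s^2 * t^0) + 2 * (a * g12) * (s^1 * t^1) + (a * g2 + Q2) * (s^0 * t^2)) / 2
   + b / 4 * (g1^2 * (s^4 * t^0) + 4 * g1 * g12 * (s^3 * t^1) + (4 * g12^2 + 2 * g1 * g2) * (s^2 * t^2)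
              + 4 * g2 * g12 * (s^1 * t^3) + g2^2 * (s^0 * t^4))"
  unfolding P_def qform_def
  by (simp add: algebra_simps power2_eq_square power3_eq_cube power4_eq_xxxx)

lemma N_power_mean_convex:
  assumes pos: "0 < s1" "0 < t1" "0 < s2" "0 < t2"
  shows "2 * N (power_mean p s1 s2 powr p) (power_mean p t1 t2 powr p)
    \<le> N (s1 powr p) (t1 powr p) + N (s2 powr p) (t2 powr p)"
proof -
  have "N (s1 powr p) (t1 powr p) + N (s2 powr p) (t2 powr p)
      - 2 * N (power_mean p s1 s2 powr p) (power_mean p t1 t2 powr p)
      = N (s1 powr p - s2 powr p) (t1 powr p - t2 powr p) / 2"
    using p pos by (simp add: power_mean_powr qform_midpoint[of A C D])
  also have "\<dots> \<ge> 0"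
    using N_ge[of "s1 powr p - s2 powr p" "t1 powr p - t2 powr p"] ell_pos
    by (smt (verit) divide_nonneg_nonneg mult_nonneg_nonneg zero_le_power2)
  finally show ?thesis by simp
qed

lemma P_power_mean_gt:
  assumes pos: "0 < s1" "0 < t1" "0 < s2" "0 < t2" and ne: "(s1, t1) \<noteq> (s2, t2)"
  shows "P s1 t1 + P s2 t2 < 2 * P (power_mean p s1 s2) (power_mean p t1 t2)"
proof -
  define sm tm where "sm = power_mean p s1 s2" and "tm = power_mean p t1 t2"
  define d where "d i j = 2 * (sm^i * tm^j) - (s1^i * t1^j + s2^i * t2^j)" for i j :: nat
  have d_nonneg: "0 \<le> d i j" if "i + j \<le> 4" for i j
    using that p monomial_le_power_mean[of p i j s1 s2 t1 t2] pos unfolding d_def sm_def tm_def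
    by simp
  have d_pos: "0 < d 2 0 \<or> 0 < d 0 2"
    using ne square_lt_power_mean[of p s1 s2] square_lt_power_mean[of p t1 t2] p pos
    unfolding d_def sm_def tm_def by auto
  have "2 * P sm tm - P s1 t1 - P s2 t2 =
      ((a * g1 + Q1) * d 2 0 + 2 * (a * g12) * d 1 1 + (a * g2 + Q2) * d 0 2) / 2
    + b / 4 * (g1^2 * d 4 0 + 4 * g1 * g12 * d 3 1 + (4 * g12^2 + 2 * g1 * g2) * d 2 2
              + 4 * g2 * g12 * d 1 3 + g2^2 * d 0 4)"
    unfolding P_expand d_def by (simp add: algebra_simps add_divide_distrib diff_divide_distrib)
  also have "\<dots> > 0"
  proof -
    have "0 \<le> a * g1" "0 \<le> a * g2" "0 \<le> a * g12" using a g1 g2 g12 by auto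
    then have "0 \<le> (a * g1 + Q1) * d 2 0" "0 \<le> (a * g2 + Q2) * d 0 2" "0 \<le> 2 * (a * g12) * d 1 1"
      and "0 < (a * g1 + Q1) * d 2 0 \<or> 0 < (a * g2 + Q2) * d 0 2"
      using d_pos d_nonneg[of 2 0] d_nonneg[of 0 2] d_nonneg[of 1 1] Q1 Q2 by auto
    then have "0 < (a * g1 + Q1) * d 2 0 + (a * g2 + Q2) * d 0 2" "0 \<le> 2 * (a * g12) * d 1 1"
      by auto
    moreover have "0 \<le> g1^2 * d 4 0 + 4 * g1 * g12 * d 3 1 + (4 * g12^2 + 2 * g1 * g2) * d 2 2
              + 4 * g2 * g12 * d 1 3 + g2^2 * d 0 4"
      using g1 g2 g12 d_nonneg[of 4 0] d_nonneg[of 3 1] d_nonneg[of 2 2] d_nonneg[of 1 3] d_nonneg[of 0 4]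
      by simp
    ultimately show ?thesis using b by (simp add: add_pos_nonneg)
  qed
  finally show ?thesis by (simp add: sm_def tm_def)
qed

text \<open>The key to uniqueness: all monomials of \<open>P\<close> have degree \<open>2\<close> or \<open>4 < p\<close>, hence are concave
  in \<open>(s\<^sup>p, t\<^sup>p)\<close> (strictly for \<open>s\<^sup>2, t\<^sup>2\<close>), while the nonlinear term is a convex quadratic form
  in \<open>(s\<^sup>p, t\<^sup>p)\<close>.\<close>
lemma fibre_J_power_mean_gt:
  assumes pos: "0 < s1" "0 < t1" "0 < s2" "0 < t2" and ne: "(s1, t1) \<noteq> (s2, t2)"
  shows "F s1 t1 + F s2 t2 < 2 * F (power_mean p s1 s2) (power_mean p t1 t2)"
proof -
  define Nm where "Nm = N (power_mean p s1 s2 powr p) (power_mean p t1 t2 powr p)"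
  have "2 * Nm / (2 * p) \<le> (N (s1 powr p) (t1 powr p) + N (s2 powr p) (t2 powr p)) / (2 * p)"
    by (rule divide_right_mono) (use N_power_mean_convex[OF pos] p in \<open>simp_all add: Nm_def\<close>)
  then have "2 * (Nm / (2 * p)) \<le> N (s1 powr p) (t1 powr p) / (2 * p) + N (s2 powr p) (t2 powr p) / (2 * p)"
    by (simp add: add_divide_distrib)
  moreover have "P1 - n1 + (P2 - n2) < 2 * (Pm - nm)" if "2 * nm \<le> n1 + n2" "P1 + P2 < 2 * Pm"
    for P1 P2 Pm n1 n2 nm :: real
    using that by argo
  ultimately show ?thesis
    using P_power_mean_gt[OF pos ne] unfolding fibre_J_eq_P Nm_def by blast
qed

lemma fibre_J_max_unique:
  assumes "0 < s1" "0 < t1" "0 < s2" "0 < t2"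
    and "\<forall>s t. 0 \<le> s \<longrightarrow> 0 \<le> t \<longrightarrow> F s t \<le> F s1 t1"
    and "\<forall>s t. 0 \<le> s \<longrightarrow> 0 \<le> t \<longrightarrow> F s t \<le> F s2 t2"
  shows "(s1, t1) = (s2, t2)"
proof (rule ccontr)
  assume "(s1, t1) \<noteq> (s2, t2)"
  then have "F s1 t1 + F s2 t2 < 2 * F (power_mean p s1 s2) (power_mean p t1 t2)"
    using fibre_J_power_mean_gt assms(1-4) by blast
  moreover have "F (power_mean p s1 s2) (power_mean p t1 t2) \<le> F s1 t1"
    "F (power_mean p s1 s2) (power_mean p t1 t2) \<le> F s2 t2"
    using assms power_mean_pos by (auto simp: less_imp_le)
  ultimately show False by linarith
qed

theorem fibre_J_unique_max:
  "\<exists>!(s, t). 0 < s \<and> 0 < t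
     \<and> fibre_nehari a b p g1 g12 g2 Q1 Q2 A C D s t = 0
     \<and> fibre_nehari a b p g2 g12 g1 Q2 Q1 D C A t s = 0
     \<and> (\<forall>s' t'. 0 \<le> s' \<longrightarrow> 0 \<le> t' \<longrightarrow> F s' t' \<le> F s t)"
proof -
  interpret swap: fibre a b p g2 g12 g1 Q2 Q1 D C A by (rule fibre_swap)
  obtain s0 t0 where st0: "0 \<le> s0" "0 \<le> t0"
    and max: "\<forall>s t. 0 \<le> s \<longrightarrow> 0 \<le> t \<longrightarrow> F s t \<le> F s0 t0"
    using fibre_J_attains_max by blast
  have max': "\<forall>t s. 0 \<le> t \<longrightarrow> 0 \<le> s \<longrightarrow> swap.F t s \<le> swap.F t0 s0"
    using max by (simp add: fibre_J_swap[of a b p g1 g12 g2])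
  have t0: "0 < t0" by (rule fibre_J_max_second_pos[OF st0 max])
  have s0: "0 < s0" by (rule swap.fibre_J_max_second_pos[OF st0(2,1) max'])
  show ?thesis
  proof (rule ex1I[of _ "(s0, t0)"])
    show "case (s0, t0) of (s, t) \<Rightarrow> 0 < s \<and> 0 < t
      \<and> fibre_nehari a b p g1 g12 g2 Q1 Q2 A C D s t = 0
      \<and> fibre_nehari a b p g2 g12 g1 Q2 Q1 D C A t s = 0
      \<and> (\<forall>s' t'. 0 \<le> s' \<longrightarrow> 0 \<le> t' \<longrightarrow> F s' t' \<le> F s t)"
      using s0 t0 max fibre_nehari_at_max[OF s0 st0(2) max] swap.fibre_nehari_at_max[OF t0 st0(1) max']
      by simp
  qed (use s0 t0 max fibre_J_max_unique in auto)
qed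

end

section \<open>Exchanging lattice sums with integrals\<close>

lemma integrable_count_space_if_summable_on:
  fixes f :: "'a \<Rightarrow> real"
  assumes "f summable_on UNIV"
  shows "integrable (count_space UNIV) f"
proof -
  have "Infinite_Sum.abs_summable_on f UNIV" using assms summable_on_iff_abs_summable_on_real by blast
  then have "Infinite_Set_Sum.abs_summable_on f UNIV" using abs_summable_equivalent by blast
  then show ?thesis by (simp add: abs_summable_on_def)
qed

lemma integral_count_space_eq_infsum:
  fixes f :: "'a \<Rightarrow> real"
  assumes "f summable_on UNIV"
  shows "integral\<^sup>L (count_space UNIV) f = (\<Sum>\<^sub>\<infinity>x. f x)"
proof -
  have "Infinite_Sum.abs_summable_on f UNIV" using assms summable_on_iff_abs_summable_on_real by blast
  then have "Infinite_Set_Sum.abs_summable_on f UNIV" using abs_summable_equivalent by blast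
  then show ?thesis using infsetsum_infsum by (metis infsetsum_def)
qed

lemma summable_on_dominated:
  fixes f g :: "'a \<Rightarrow> real"
  assumes "g summable_on UNIV" "\<And>x. \<bar>f x\<bar> \<le> g x"
  shows "f summable_on UNIV"
proof -
  have "(\<lambda>x. \<bar>f x\<bar>) summable_on UNIV"
    using assms by (intro summable_on_comparison_test[OF assms(1)]) auto
  then show ?thesis using summable_on_iff_abs_summable_on_real by fastforce
qed

lemma summable_on_nonneg_le:
  fixes f g :: "'a \<Rightarrow> real"
  assumes "g summable_on UNIV" "\<And>x. 0 \<le> f x" "\<And>x. f x \<le> g x"
  shows "f summable_on UNIV"
  using assms by (intro summable_on_dominated[OF assms(1)]) auto

lemma infsum_lincomb3:
  fixes f1 f2 f3 :: "'a \<Rightarrow> real"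
  assumes "f1 summable_on UNIV" "f2 summable_on UNIV" "f3 summable_on UNIV"
  shows "(\<lambda>x. c1 * f1 x + c2 * f2 x + c3 * f3 x) summable_on UNIV"
    and "(\<Sum>\<^sub>\<infinity>x. c1 * f1 x + c2 * f2 x + c3 * f3 x) = c1 * infsum f1 UNIV + c2 * infsum f2 UNIV + c3 * infsum f3 UNIV"
proof -
  have "((\<lambda>x. c1 * f1 x + c2 * f2 x + c3 * f3 x) has_sum (c1 * infsum f1 UNIV + c2 * infsum f2 UNIV + c3 * infsum f3 UNIV)) UNIV"
    using assms by (intro has_sum_add has_sum_cmult_right has_sum_infsum)
  then show "(\<lambda>x. c1 * f1 x + c2 * f2 x + c3 * f3 x) summable_on UNIV"
    and "(\<Sum>\<^sub>\<infinity>x. c1 * f1 x + c2 * f2 x + c3 * f3 x) = c1 * infsum f1 UNIV + c2 * infsum f2 UNIV + c3 * infsum f3 UNIV"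
    by (auto simp: infsumI summable_on_def)
qed


lemma abs_le_sqrt_infsum_sq:
  fixes f :: "'a \<Rightarrow> real"
  assumes "(\<lambda>x. (f x)^2) summable_on UNIV"
  shows "\<bar>f x\<bar> \<le> sqrt (\<Sum>\<^sub>\<infinity>x. (f x)^2)"
proof -
  have "infsum (\<lambda>x. (f x)^2) {x} \<le> infsum (\<lambda>x. (f x)^2) UNIV"
    using assms by (intro infsum_mono_neutral) auto
  then have "(f x)^2 \<le> (\<Sum>\<^sub>\<infinity>x. (f x)^2)" by simp
  then have "sqrt ((f x)^2) \<le> sqrt (\<Sum>\<^sub>\<infinity>x. (f x)^2)" by (rule real_sqrt_le_mono)
  then show ?thesis by simp
qed


lemma integrable_count_space_pair_dominated:
  fixes \<phi> :: "'a::countable \<Rightarrow> real" and g :: "'b \<Rightarrow> real" and F :: "'a \<Rightarrow> 'b \<Rightarrow> real"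
  assumes M: "sigma_finite_measure M" and \<phi>: "\<phi> summable_on UNIV" and g: "integrable M g"
    and F_meas: "(\<lambda>z. F (fst z) (snd z)) \<in> borel_measurable (count_space UNIV \<Otimes>\<^sub>M M)"
    and F_meas': "\<And>x. (\<lambda>k. F x k) \<in> borel_measurable M"
    and F_bound: "\<And>x k. \<bar>F x k\<bar> \<le> \<bar>\<phi> x\<bar> * \<bar>g k\<bar>"
  shows "integrable (count_space UNIV \<Otimes>\<^sub>M M) (\<lambda>z. F (fst z) (snd z))"
proof -
  interpret M: sigma_finite_measure M by (rule M)
  interpret C: sigma_finite_measure "count_space (UNIV::'a set)"
    by (rule sigma_finite_measure_count_space_countable) simp
  interpret P: pair_sigma_finite "count_space (UNIV::'a set)" M ..
  have F_int: "integrable M (\<lambda>k. F x k)" for x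
  proof (rule Bochner_Integration.integrable_bound[of _ "\<lambda>k. \<bar>\<phi> x\<bar> * \<bar>g k\<bar>"])
    show "integrable M (\<lambda>k. \<bar>\<phi> x\<bar> * \<bar>g k\<bar>)" using g by simp
    show "AE k in M. norm (F x k) \<le> norm (\<bar>\<phi> x\<bar> * \<bar>g k\<bar>)"
      using F_bound by (intro AE_I2) simp
  qed (rule F_meas')
  define ng where "ng = (\<integral>k. \<bar>g k\<bar> \<partial>M)"
  have le: "(\<integral>k. norm (F x k) \<partial>M) \<le> \<bar>\<phi> x\<bar> * ng" for x
  proof -
    have "(\<integral>k. norm (F x k) \<partial>M) \<le> (\<integral>k. \<bar>\<phi> x\<bar> * \<bar>g k\<bar> \<partial>M)"
    proof (rule integral_mono)
      show "integrable M (\<lambda>k. norm (F x k))" using F_int by simp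
      show "integrable M (\<lambda>k. \<bar>\<phi> x\<bar> * \<bar>g k\<bar>)" using g by simp
    qed (use F_bound in simp)
    then show ?thesis unfolding ng_def by simp
  qed
  have "(\<lambda>x. \<bar>\<phi> x\<bar>) summable_on UNIV"
    using \<phi> summable_on_iff_abs_summable_on_real by fastforce
  then have "(\<lambda>x. \<bar>\<phi> x\<bar> * ng) summable_on UNIV" by (rule summable_on_cmult_left)
  then have "(\<lambda>x. \<integral>k. norm (F x k) \<partial>M) summable_on UNIV"
    by (rule summable_on_dominated) (use le in simp)
  then show ?thesis
  proof (intro P.Fubini_integrable F_meas)
    show "integrable (count_space UNIV) (\<lambda>x. \<integral>k. norm (F (fst (x, k)) (snd (x, k))) \<partial>M)"
      if "(\<lambda>x. \<integral>k. norm (F x k) \<partial>M) summable_on UNIV"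
      using integrable_count_space_if_summable_on[OF that] by simp
  qed (use F_int in simp)
qed

lemma infsum_integral_exchange:
  fixes \<phi> :: "'a::countable \<Rightarrow> real" and e :: "'a \<Rightarrow> 'b \<Rightarrow> real" and g :: "'b \<Rightarrow> real"
  assumes M: "sigma_finite_measure M" and \<phi>: "\<phi> summable_on UNIV" and g: "integrable M g"
    and e_meas: "\<And>x. e x \<in> borel_measurable M" and e_bound: "\<And>x k. \<bar>e x k\<bar> \<le> 1"
  shows "(\<lambda>x. \<phi> x * (\<integral>k. e x k * g k \<partial>M)) summable_on UNIV"
    and "integrable M (\<lambda>k. (\<Sum>\<^sub>\<infinity>x. \<phi> x * e x k) * g k)"
    and "(\<Sum>\<^sub>\<infinity>x. \<phi> x * (\<integral>k. e x k * g k \<partial>M)) = (\<integral>k. (\<Sum>\<^sub>\<infinity>x. \<phi> x * e x k) * g k \<partial>M)"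
proof -
  interpret M: sigma_finite_measure M by (rule M)
  interpret C: sigma_finite_measure "count_space (UNIV::'a set)"
    by (rule sigma_finite_measure_count_space_countable) simp
  interpret P: pair_sigma_finite "count_space (UNIV::'a set)" M ..
  define F where "F x k = \<phi> x * e x k * g k" for x k
  have eg_bound: "\<bar>e x k * g k\<bar> \<le> \<bar>g k\<bar>" for x k
    using e_bound[of x k] by (simp add: abs_mult mult_left_le_one_le)
  have F_bound: "\<bar>F x k\<bar> \<le> \<bar>\<phi> x\<bar> * \<bar>g k\<bar>" for x k
    using eg_bound[of x k] unfolding F_def by (simp add: abs_mult mult.assoc mult_left_mono)
  have g_meas: "g \<in> borel_measurable M" using g by simp
  have abs_\<phi>: "(\<lambda>x. \<bar>\<phi> x\<bar>) summable_on UNIV"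
    using \<phi> summable_on_iff_abs_summable_on_real by fastforce
  have "integrable (count_space UNIV \<Otimes>\<^sub>M M) (\<lambda>z. F (fst z) (snd z))"
  proof (rule integrable_count_space_pair_dominated[OF M \<phi> g _ _ F_bound])
    show "(\<lambda>z. F (fst z) (snd z)) \<in> borel_measurable (count_space UNIV \<Otimes>\<^sub>M M)"
      unfolding F_def by (rule measurable_pair_measure_countable1) (use e_meas g_meas in auto)
    show "(\<lambda>k. F x k) \<in> borel_measurable M" for x unfolding F_def using e_meas g_meas by simp
  qed
  then have F_prod: "integrable (count_space UNIV \<Otimes>\<^sub>M M) (case_prod F)"
    by (simp add: case_prod_beta')
  have F_sum: "(\<integral>x. F x k \<partial>count_space UNIV) = (\<Sum>\<^sub>\<infinity>x. \<phi> x * e x k) * g k" for k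
  proof -
    have "(\<lambda>x. \<bar>\<phi> x\<bar> * \<bar>g k\<bar>) summable_on UNIV"
      using abs_\<phi> by (rule summable_on_cmult_left)
    then have "(\<lambda>x. F x k) summable_on UNIV" using F_bound by (rule summable_on_dominated)
    then have "(\<integral>x. F x k \<partial>count_space UNIV) = (\<Sum>\<^sub>\<infinity>x. F x k)"
      by (rule integral_count_space_eq_infsum)
    also have "\<dots> = (\<Sum>\<^sub>\<infinity>x. \<phi> x * e x k) * g k" unfolding F_def by (rule infsum_cmult_left')
    finally show ?thesis .
  qed
  show sum: "(\<lambda>x. \<phi> x * (\<integral>k. e x k * g k \<partial>M)) summable_on UNIV"
  proof (rule summable_on_dominated)
    show "(\<lambda>x. \<bar>\<phi> x\<bar> * (\<integral>k. \<bar>g k\<bar> \<partial>M)) summable_on UNIV"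
      using abs_\<phi> by (rule summable_on_cmult_left)
    have "\<bar>\<integral>k. e x k * g k \<partial>M\<bar> \<le> (\<integral>k. \<bar>g k\<bar> \<partial>M)" for x
    proof -
      have "integrable M (\<lambda>k. e x k * g k)"
      proof (rule Bochner_Integration.integrable_bound[OF g])
        show "(\<lambda>k. e x k * g k) \<in> borel_measurable M" using e_meas g_meas by simp
        show "AE k in M. norm (e x k * g k) \<le> norm (g k)" using eg_bound by (intro AE_I2) simp
      qed
      then have "(\<integral>k. \<bar>e x k * g k\<bar> \<partial>M) \<le> (\<integral>k. \<bar>g k\<bar> \<partial>M)"
        using g eg_bound by (intro integral_mono) auto
      then show ?thesis using integral_abs_bound[of M "\<lambda>k. e x k * g k"] by linarith
    qed
    then show "\<bar>\<phi> x * (\<integral>k. e x k * g k \<partial>M)\<bar> \<le> \<bar>\<phi> x\<bar> * (\<integral>k. \<bar>g k\<bar> \<partial>M)" for x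
      by (simp add: abs_mult mult_left_mono)
  qed
  show "integrable M (\<lambda>k. (\<Sum>\<^sub>\<infinity>x. \<phi> x * e x k) * g k)"
    using P.integrable_snd[OF F_prod] F_sum by simp
  have "(\<integral>k. (\<integral>x. F x k \<partial>count_space UNIV) \<partial>M) = (\<integral>x. (\<integral>k. F x k \<partial>M) \<partial>count_space UNIV)"
    by (rule P.Fubini_integral[OF F_prod])
  also have "\<dots> = (\<Sum>\<^sub>\<infinity>x. \<phi> x * (\<integral>k. e x k * g k \<partial>M))"
    unfolding F_def by (simp add: mult.assoc integral_count_space_eq_infsum[OF sum])
  finally show "(\<Sum>\<^sub>\<infinity>x. \<phi> x * (\<integral>k. e x k * g k \<partial>M)) = (\<integral>k. (\<Sum>\<^sub>\<infinity>x. \<phi> x * e x k) * g k \<partial>M)"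
    unfolding F_sum by simp
qed

section \<open>The Riesz kernel\<close>

lemma concave_on_sin: "concave_on {0..pi/2} sin"
proof (rule f''_le0_imp_concave[where f' = cos and f'' = "\<lambda>x. - sin x"])
  show "- sin x \<le> 0" if "x \<in> {0..pi/2}" for x using that by (simp add: sin_ge_zero)
qed (auto intro: DERIV_sin DERIV_cos)

lemma jordan_sin_ge:
  assumes "0 \<le> y" "y \<le> pi/2"
  shows "2 * y / pi \<le> sin y"
proof -
  define t where "t = 2 * y / pi"
  have t: "0 \<le> t" "t \<le> 1" using assms pi_gt_zero by (auto simp: t_def field_simps)
  have "(1 - t) * sin 0 + t * sin (pi/2) \<le> sin ((1 - t) *\<^sub>R 0 + t *\<^sub>R (pi/2))"
    using concave_onD[OF concave_on_sin, of t 0 "pi/2"] t by simp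
  moreover have "(1 - t) *\<^sub>R 0 + t *\<^sub>R (pi/2) = y" unfolding t_def by simp
  ultimately show ?thesis by (simp add: t_def)
qed

lemma one_minus_cos_ge:
  fixes x :: real
  assumes "\<bar>x\<bar> \<le> pi"
  shows "2 * x^2 / pi^2 \<le> 1 - cos x"
proof -
  have "cos x = cos (2 * (\<bar>x\<bar>/2))" by (cases "0 \<le> x") auto
  also have "\<dots> = 1 - 2 * sin (\<bar>x\<bar>/2) ^ 2" by (rule cos_double_sin)
  finally have half: "1 - cos x = 2 * sin (\<bar>x\<bar>/2) ^ 2" by simp
  have "(\<bar>x\<bar> / pi)^2 \<le> sin (\<bar>x\<bar>/2) ^ 2"
    using jordan_sin_ge[of "\<bar>x\<bar>/2"] assms by (intro power_mono) auto
  then show ?thesis unfolding half by (simp add: power_divide)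
qed

lemma mem_torus_iff: "k \<in> torus \<longleftrightarrow> \<bar>fst k\<bar> \<le> pi \<and> \<bar>fst (snd k)\<bar> \<le> pi \<and> \<bar>snd (snd k)\<bar> \<le> pi"
  by (cases k) (auto simp: torus_def cbox_Pair_iff abs_le_iff)

lemma symb_ge:
  assumes "k \<in> torus"
  shows "4 / pi^2 * ((fst k)^2 + (fst (snd k))^2 + (snd (snd k))^2) \<le> symb k"
proof -
  have "2 * (fst k)^2 / pi^2 \<le> 1 - cos (fst k)" "2 * (fst (snd k))^2 / pi^2 \<le> 1 - cos (fst (snd k))"
    "2 * (snd (snd k))^2 / pi^2 \<le> 1 - cos (snd (snd k))"
    using assms by (auto simp: mem_torus_iff intro!: one_minus_cos_ge)
  then show ?thesis unfolding symb_def by (simp add: field_simps)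
qed

lemma symb_pos:
  assumes "k \<in> torus" "k \<noteq> 0"
  shows "0 < symb k"
proof -
  have "0 < (fst k)^2 + (fst (snd k))^2 + (snd (snd k))^2"
    using assms(2) by (cases k) (auto simp: zero_prod_def add_pos_nonneg add_nonneg_pos)
  then have "0 < 4 / pi^2 * ((fst k)^2 + (fst (snd k))^2 + (snd (snd k))^2)" by simp
  then show ?thesis using symb_ge[OF assms(1)] by linarith
qed

lemma symb_nonneg: "0 \<le> symb k"
proof -
  have "cos (fst k) \<le> 1" "cos (fst (snd k)) \<le> 1" "cos (snd (snd k)) \<le> 1" by auto
  then show ?thesis unfolding symb_def by (smt (verit))
qed

lemma symb_continuous: "continuous_on UNIV symb"
  unfolding symb_def by (intro continuous_intros)

lemma symb_measurable[measurable]: "symb \<in> borel_measurable lborel"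
  using borel_measurable_continuous_onI[OF symb_continuous] by simp

lemma torus_sets[measurable]: "torus \<in> sets lborel"
  unfolding torus_def by simp

text \<open>Near \<open>k = 0\<close> the symbol is comparable to \<open>|k|\<^sup>2\<close>. Bounding \<open>|k| powr -\<alpha>\<close> by the product of the
  one-dimensional singularities \<open>|k\<^sub>i| powr (-\<alpha>/3)\<close>, each integrable since \<open>\<alpha> < 3\<close>, gives the
  integrability of \<open>symb powr (-\<alpha>/2)\<close> on the torus.\<close>
lemma symb_powr_le:
  assumes \<alpha>: "0 < \<alpha>" and k: "k \<in> torus"
    and nz: "fst k \<noteq> 0" "fst (snd k) \<noteq> 0" "snd (snd k) \<noteq> 0"
  shows "symb k powr (-\<alpha>/2) \<le> (4 / pi^2) powr (-\<alpha>/2) *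
     (\<bar>fst k\<bar> powr (-\<alpha>/3) * \<bar>fst (snd k)\<bar> powr (-\<alpha>/3) * \<bar>snd (snd k)\<bar> powr (-\<alpha>/3))"
proof -
  define S where "S = (fst k)^2 + (fst (snd k))^2 + (snd (snd k))^2"
  have S: "0 < S" using nz by (simp add: S_def add_pos_nonneg)
  have coord: "S powr (-\<alpha>/6) \<le> \<bar>x\<bar> powr (-\<alpha>/3)" if "x \<noteq> 0" "x^2 \<le> S" for x
  proof -
    have "S powr (-\<alpha>/6) \<le> (\<bar>x\<bar> powr 2) powr (-\<alpha>/6)"
      using that \<alpha> by (intro powr_mono2') (auto simp: powr_numeral)
    also have "\<dots> = \<bar>x\<bar> powr (-\<alpha>/3)" unfolding powr_powr by (simp add: field_simps)
    finally show ?thesis .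
  qed
  have "symb k powr (-\<alpha>/2) \<le> (4 / pi^2 * S) powr (-\<alpha>/2)"
    using \<alpha> S symb_ge[OF k] by (intro powr_mono2') (auto simp: S_def)
  also have "\<dots> = (4 / pi^2) powr (-\<alpha>/2) * S powr (-\<alpha>/2)"
    using powr_mult[of "4 / pi^2" S "-\<alpha>/2"] S by simp
  also have "S powr (-\<alpha>/2) = S powr (-\<alpha>/6) * S powr (-\<alpha>/6) * S powr (-\<alpha>/6)"
    by (simp add: powr_add[symmetric])
  also have "\<dots> \<le> \<bar>fst k\<bar> powr (-\<alpha>/3) * \<bar>fst (snd k)\<bar> powr (-\<alpha>/3) * \<bar>snd (snd k)\<bar> powr (-\<alpha>/3)"
    using coord[of "fst k"] coord[of "fst (snd k)"] coord[of "snd (snd k)"] nz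
    by (intro mult_mono) (auto simp: S_def)
  finally show ?thesis by (simp add: mult_left_mono)
qed

lemma prod_Basis_real3:
  fixes f :: "real \<Rightarrow> 'a::comm_monoid_mult"
  shows "(\<Prod>b\<in>(Basis::(real \<times> real \<times> real) set). f (k \<bullet> b)) = f (fst k) * f (fst (snd k)) * f (snd (snd k))"
  by (cases k) (simp add: Basis_prod_def prod.union_disjoint prod.reindex inj_on_def image_Int image_iff mult_ac)

lemma abs_powr_has_integral:
  fixes \<beta> :: real
  assumes "0 \<le> \<beta>" "\<beta> < 1"
  shows "((\<lambda>x. \<bar>x\<bar> powr (-\<beta>)) has_integral (2 * (pi powr (1 - \<beta>) / (1 - \<beta>)))) {-pi..pi}"
proof -
  have "((\<lambda>x. x powr (-\<beta>)) has_integral (pi powr (1 - \<beta>) / (1 - \<beta>))) {0..pi}"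
    using has_integral_powr_from_0[of "-\<beta>" pi] assms by (simp add: add.commute)
  then have right: "((\<lambda>x. \<bar>x\<bar> powr (-\<beta>)) has_integral (pi powr (1 - \<beta>) / (1 - \<beta>))) {0..pi}"
    by (rule has_integral_eq[rotated]) auto
  then have left: "((\<lambda>x. \<bar>x\<bar> powr (-\<beta>)) has_integral (pi powr (1 - \<beta>) / (1 - \<beta>))) {-pi..0}"
    using has_integral_reflect_real[where f="\<lambda>x. \<bar>x\<bar> powr (-\<beta>)" and a=0 and b=pi] by simp
  have "((\<lambda>x. \<bar>x\<bar> powr (-\<beta>)) has_integral (pi powr (1 - \<beta>) / (1 - \<beta>) + pi powr (1 - \<beta>) / (1 - \<beta>))) {-pi..pi}"
    by (rule has_integral_combine[OF _ _ left right]) auto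
  then show ?thesis by simp
qed

definition coord_singularity :: "real \<Rightarrow> real \<times> real \<times> real \<Rightarrow> real" where
  "coord_singularity \<beta> k =
     (\<Prod>b\<in>(Basis::(real \<times> real \<times> real) set). indicator {-pi..pi} (k \<bullet> b) * \<bar>k \<bullet> b\<bar> powr (-\<beta>))"

lemma coord_singularity_nonneg: "0 \<le> coord_singularity \<beta> k"
  unfolding coord_singularity_def by (auto intro!: prod_nonneg)

lemma coord_singularity_eq:
  "k \<in> torus \<Longrightarrow>
     coord_singularity \<beta> k = \<bar>fst k\<bar> powr (-\<beta>) * \<bar>fst (snd k)\<bar> powr (-\<beta>) * \<bar>snd (snd k)\<bar> powr (-\<beta>)"
  unfolding coord_singularity_def prod_Basis_real3[where f = "\<lambda>x. indicator {-pi..pi} x * \<bar>x\<bar> powr (-\<beta>)"]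
  by (auto simp: mem_torus_iff abs_le_iff)

lemma coord_singularity_integrable:
  assumes "0 \<le> \<beta>" "\<beta> < 1"
  shows "integrable lborel (coord_singularity \<beta>)"
proof (rule integrableI_nn_integral_finite)
  show "coord_singularity \<beta> \<in> borel_measurable lborel"
    unfolding coord_singularity_def by measurable
  show "AE k in lborel. 0 \<le> coord_singularity \<beta> k" by (simp add: coord_singularity_nonneg)
  define c where "c = 2 * (pi powr (1 - \<beta>) / (1 - \<beta>))"
  have c: "0 \<le> c" using assms by (simp add: c_def)
  have one_dim: "(\<integral>\<^sup>+ x. ennreal (indicator {-pi..pi} x * \<bar>x\<bar> powr (-\<beta>)) \<partial>lborel) = ennreal c"
    unfolding c_def by (rule nn_integral_has_integral_lebesgue[OF _ abs_powr_has_integral[OF assms]]) simp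
  have "(\<integral>\<^sup>+ k. ennreal (coord_singularity \<beta> k) \<partial>lborel)
     = (\<integral>\<^sup>+ k. (\<Prod>b\<in>(Basis::(real \<times> real \<times> real) set).
          ennreal (indicator {-pi..pi} (k \<bullet> b) * \<bar>k \<bullet> b\<bar> powr (-\<beta>))) \<partial>lborel)"
    unfolding coord_singularity_def by (subst prod_ennreal) auto
  also have "\<dots> = (\<Prod>b\<in>(Basis::(real \<times> real \<times> real) set).
          (\<integral>\<^sup>+ x. ennreal (indicator {-pi..pi} x * \<bar>x\<bar> powr (-\<beta>)) \<partial>lborel))"
    by (rule nn_integral_lborel_prod) auto
  also have "\<dots> = ennreal c ^ 3" by (simp add: one_dim power3_eq_cube mult.assoc)
  also have "\<dots> = ennreal (c ^ 3)" using c by (simp add: ennreal_power)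
  finally show "(\<integral>\<^sup>+ k. ennreal (coord_singularity \<beta> k) \<partial>lborel) = ennreal (c ^ 3)" .
qed

lemma AE_coords_nonzero: "AE k in (lborel :: (real\<times>real\<times>real) measure). fst k \<noteq> 0 \<and> fst (snd k) \<noteq> 0 \<and> snd (snd k) \<noteq> 0"
proof -
  have n1: "{0::real} \<times> (UNIV::(real\<times>real) set) \<in> null_sets (lborel \<Otimes>\<^sub>M lborel)"
    by (rule lborel.times_in_null_sets1) auto
  have n2a: "{0::real} \<times> (UNIV::real set) \<in> null_sets (lborel \<Otimes>\<^sub>M lborel)"
    by (rule lborel.times_in_null_sets1) auto
  have n3a: "(UNIV::real set) \<times> {0::real} \<in> null_sets (lborel \<Otimes>\<^sub>M lborel)"
    by (rule lborel.times_in_null_sets2) auto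
  have n2b: "{0::real} \<times> (UNIV::real set) \<in> null_sets (lborel :: (real\<times>real) measure)"
    using n2a by (simp only: lborel_prod)
  have n3b: "(UNIV::real set) \<times> {0::real} \<in> null_sets (lborel :: (real\<times>real) measure)"
    using n3a by (simp only: lborel_prod)
  have n2: "(UNIV::real set) \<times> ({0::real} \<times> (UNIV::real set)) \<in> null_sets (lborel \<Otimes>\<^sub>M lborel)"
    by (rule lborel.times_in_null_sets2) (use n2b in auto)
  have n3: "(UNIV::real set) \<times> ((UNIV::real set) \<times> {0::real}) \<in> null_sets (lborel \<Otimes>\<^sub>M lborel)"
    by (rule lborel.times_in_null_sets2) (use n3b in auto)
  let ?N = "{0::real} \<times> (UNIV::(real\<times>real) set) \<union> (UNIV::real set) \<times> ({0::real} \<times> (UNIV::real set))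
     \<union> (UNIV::real set) \<times> ((UNIV::real set) \<times> {0::real})"
  have "?N \<in> null_sets (lborel \<Otimes>\<^sub>M lborel)" using n1 n2 n3 by auto
  then have N: "?N \<in> null_sets (lborel :: (real\<times>real\<times>real) measure)" by (simp only: lborel_prod)
  show ?thesis by (rule AE_I'[OF N]) auto
qed

definition riesz_weight :: "real \<Rightarrow> real \<times> real \<times> real \<Rightarrow> real" where
  "riesz_weight \<alpha> k = indicator torus k * symb k powr (-\<alpha>/2)"

lemma riesz_weight_nonneg: "0 \<le> riesz_weight \<alpha> k"
  unfolding riesz_weight_def by simp

lemma riesz_weight_measurable[measurable]: "riesz_weight \<alpha> \<in> borel_measurable lborel"
  unfolding riesz_weight_def by measurable

lemma riesz_weight_integrable:
  assumes \<alpha>: "0 < \<alpha>" "\<alpha> < 3"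
  shows "integrable lborel (riesz_weight \<alpha>)"
proof (rule Bochner_Integration.integrable_bound)
  show "integrable lborel (\<lambda>k. (4 / pi^2) powr (-\<alpha>/2) * coord_singularity (\<alpha>/3) k)"
    using coord_singularity_integrable[of "\<alpha>/3"] \<alpha> by simp
  show "AE k in lborel. norm (riesz_weight \<alpha> k) \<le> norm ((4 / pi^2) powr (-\<alpha>/2) * coord_singularity (\<alpha>/3) k)"
    using AE_coords_nonzero
  proof eventually_elim
    case (elim k)
    show ?case
    proof (cases "k \<in> torus")
      case True
      have nz: "fst k \<noteq> 0" "fst (snd k) \<noteq> 0" "snd (snd k) \<noteq> 0" using elim by auto
      have "symb k powr (-\<alpha>/2) \<le> (4 / pi^2) powr (-\<alpha>/2) * coord_singularity (\<alpha>/3) k"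
        using symb_powr_le[OF \<alpha>(1) True nz] by (simp only: coord_singularity_eq[OF True] minus_divide_left)
      then show ?thesis using True coord_singularity_nonneg[of "\<alpha>/3" k] by (simp add: riesz_weight_def)
    qed (simp add: riesz_weight_def coord_singularity_nonneg)
  qed
qed measurable

lemma K_const_pos:
  assumes "0 < \<alpha>"
  shows "0 < K_const \<alpha>"
proof -
  define f where "f k = symb k powr (\<alpha>/2)" for k
  define B where "B = cbox (pi/2, pi/2, pi/2) (pi, pi, pi)"
  have f_cont: "continuous_on S f" for S
    unfolding f_def using assms
    by (intro continuous_on_powr' continuous_on_subset[OF symb_continuous] continuous_on_const)
      (auto simp: symb_nonneg)
  have f_int_B: "f integrable_on B" unfolding B_def by (rule integrable_continuous[OF f_cont])
  have f_int_torus: "f integrable_on torus" unfolding torus_def by (rule integrable_continuous[OF f_cont])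
  have B_torus: "B \<subseteq> torus" unfolding B_def torus_def by (auto simp: cbox_Pair_iff)
  \<comment> \<open>on \<open>B\<close> all three cosines are nonpositive, so \<open>symb \<ge> 6\<close> there\<close>
  have f_ge: "1 \<le> f k" if "k \<in> B" for k
  proof -
    have cos_nonpos: "cos x \<le> 0" if "pi/2 \<le> x" "x \<le> pi" for x
      using cos_ge_zero[of "pi - x"] that by simp
    obtain k1 k2 k3 where k: "k = (k1, k2, k3)" by (cases k)
    have "cos (fst k) \<le> 0" "cos (fst (snd k)) \<le> 0" "cos (snd (snd k)) \<le> 0"
      using that by (auto simp: k B_def cbox_Pair_iff intro!: cos_nonpos)
    then have "1 \<le> symb k" unfolding symb_def by simp
    then show ?thesis unfolding f_def using assms by (simp add: ge_one_powr_ge_zero)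
  qed
  have "0 < measure lborel B" unfolding B_def by (rule content_pos_lt) (auto simp: Basis_prod_def)
  also have "\<dots> = integral B (\<lambda>k. 1::real)" unfolding B_def by simp
  also have "\<dots> \<le> integral B f"
    by (rule integral_le) (use f_int_B f_ge in \<open>auto simp: B_def\<close>)
  also have "\<dots> \<le> integral torus f"
    by (rule integral_subset_le[OF B_torus f_int_B f_int_torus]) (simp add: f_def)
  finally show ?thesis unfolding K_const_def f_def by simp
qed

definition riesz_const :: "real \<Rightarrow> real" where
  "riesz_const \<alpha> = K_const \<alpha> / (2 * pi)^3"

lemma riesz_const_pos: "0 < \<alpha> \<Longrightarrow> 0 < riesz_const \<alpha>"
  unfolding riesz_const_def using K_const_pos by simp

lemma dotk_continuous: "continuous_on UNIV (dotk z)"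
  unfolding dotk_def by (intro continuous_intros)

lemma dotk_measurable[measurable]: "dotk z \<in> borel_measurable lborel"
  using borel_measurable_continuous_onI[OF dotk_continuous] by simp

lemma dotk_diff: "dotk (x - y) k = dotk x k - dotk y k"
  unfolding dotk_def by (simp add: algebra_simps)

lemma R_kernel_eq_integral:
  assumes \<alpha>: "0 < \<alpha>" "\<alpha> < 3"
  shows "R_kernel \<alpha> x y = riesz_const \<alpha> * (\<integral>k. cos (dotk (x - y) k) * riesz_weight \<alpha> k \<partial>lborel)"
proof -
  define F where "F k = exp (\<i> * complex_of_real (dotk (x - y) k)) * complex_of_real (symb k powr (-\<alpha>/2))" for k
  have F_int: "set_integrable lborel torus F"
    unfolding set_integrable_def
  proof (rule Bochner_Integration.integrable_bound[OF riesz_weight_integrable[OF \<alpha>]])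
    show "(\<lambda>k. indicator torus k *\<^sub>R F k) \<in> borel_measurable lborel"
      unfolding F_def by measurable
    show "AE k in lborel. norm (indicator torus k *\<^sub>R F k) \<le> norm (riesz_weight \<alpha> k)"
      by (intro AE_I2) (simp add: F_def riesz_weight_def norm_mult indicator_def)
  qed
  have "Re (integral torus F) = Re (set_lebesgue_integral lborel torus F)"
    by (simp add: set_borel_integral_eq_integral(2)[OF F_int])
  also have "\<dots> = (\<integral>k. Re (indicator torus k *\<^sub>R F k) \<partial>lborel)"
    unfolding set_lebesgue_integral_def using F_int unfolding set_integrable_def
    by (rule integral_Re[symmetric])
  also have "\<dots> = (\<integral>k. cos (dotk (x - y) k) * riesz_weight \<alpha> k \<partial>lborel)"
    by (rule Bochner_Integration.integral_cong) (auto simp: F_def riesz_weight_def indicator_def Re_exp)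
  finally show ?thesis unfolding R_kernel_def riesz_const_def F_def by simp
qed

section \<open>Fourier coefficients and positive definiteness of the Riesz kernel\<close>

text \<open>For \<open>c = cos\<close> and \<open>c = sin\<close> these are the real part and minus the imaginary part of
  \<open>\<Sum>x. \<phi> x * exp (- \<i> * dotk x k)\<close>.\<close>
definition fourier_coeff :: "(real \<Rightarrow> real) \<Rightarrow> (pt \<Rightarrow> real) \<Rightarrow> real \<times> real \<times> real \<Rightarrow> real" where
  "fourier_coeff c \<phi> k = (\<Sum>\<^sub>\<infinity>x. \<phi> x * c (dotk x k))"

lemma trig_abs_le_one:
  fixes c :: "real \<Rightarrow> real"
  shows "c \<in> {cos, sin} \<Longrightarrow> \<bar>c y\<bar> \<le> 1"
  by (auto simp: abs_cos_le_one abs_sin_le_one)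

lemma trig_dotk_measurable:
  fixes c :: "real \<Rightarrow> real"
  shows "c \<in> {cos, sin} \<Longrightarrow> (\<lambda>k. c (dotk x k)) \<in> borel_measurable lborel"
  by auto

lemma integrable_trig_dotk_mult:
  assumes "c \<in> {cos, sin}" "integrable lborel g"
  shows "integrable lborel (\<lambda>k. c (dotk x k) * g k)"
proof (rule Bochner_Integration.integrable_bound[OF assms(2)])
  show "(\<lambda>k. c (dotk x k) * g k) \<in> borel_measurable lborel"
    using trig_dotk_measurable[OF assms(1)] assms(2) by simp
  show "AE k in lborel. norm (c (dotk x k) * g k) \<le> norm (g k)"
    using trig_abs_le_one[OF assms(1)] by (intro AE_I2) (simp add: abs_mult mult_left_le_one_le)
qed

lemma summable_on_trig_dotk_mult:
  assumes "c \<in> {cos, sin}" "\<phi> summable_on UNIV"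
  shows "(\<lambda>x. \<phi> x * c (dotk x k)) summable_on UNIV"
proof (rule summable_on_dominated)
  show "(\<lambda>x. \<bar>\<phi> x\<bar>) summable_on UNIV"
    using assms(2) summable_on_iff_abs_summable_on_real by fastforce
  show "\<bar>\<phi> x * c (dotk x k)\<bar> \<le> \<bar>\<phi> x\<bar>" for x
    using trig_abs_le_one[OF assms(1)] by (simp add: abs_mult mult_right_le_one_le)
qed

lemma fourier_coeff_linear:
  assumes "c \<in> {cos, sin}" "f summable_on UNIV" "g summable_on UNIV"
  shows "fourier_coeff c (\<lambda>x. X * f x + Y * g x) k = X * fourier_coeff c f k + Y * fourier_coeff c g k"
proof -
  have "fourier_coeff c (\<lambda>x. X * f x + Y * g x) k
      = (\<Sum>\<^sub>\<infinity>x. X * (f x * c (dotk x k)) + Y * (g x * c (dotk x k)))"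
    unfolding fourier_coeff_def by (rule infsum_cong) (simp add: algebra_simps)
  also have "\<dots> = (\<Sum>\<^sub>\<infinity>x. X * (f x * c (dotk x k))) + (\<Sum>\<^sub>\<infinity>x. Y * (g x * c (dotk x k)))"
    using assms by (intro infsum_add summable_on_cmult_right summable_on_trig_dotk_mult)
  finally show ?thesis unfolding fourier_coeff_def by (simp add: infsum_cmult_right')
qed

lemma fourier_coeff_exchange:
  assumes "c \<in> {cos, sin}" "\<phi> summable_on UNIV" "integrable lborel g"
  shows "(\<lambda>x. \<phi> x * (\<integral>k. c (dotk x k) * g k \<partial>lborel)) summable_on UNIV"
    and "integrable lborel (\<lambda>k. fourier_coeff c \<phi> k * g k)"
    and "(\<Sum>\<^sub>\<infinity>x. \<phi> x * (\<integral>k. c (dotk x k) * g k \<partial>lborel)) = (\<integral>k. fourier_coeff c \<phi> k * g k \<partial>lborel)"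
  using infsum_integral_exchange[OF lborel.sigma_finite_measure_axioms assms(2,3), of "\<lambda>x k. c (dotk x k)"]
    trig_dotk_measurable[OF assms(1)] trig_abs_le_one[OF assms(1)]
  unfolding fourier_coeff_def by auto

lemma integral_cos_affine:
  fixes n :: int and c :: real
  shows "integral {-pi..pi} (\<lambda>t. cos (c + real_of_int n * t)) = (if n = 0 then 2 * pi * cos c else 0)"
proof (cases "n = 0")
  case False
  define F where "F t = sin (c + real_of_int n * t) / real_of_int n" for t
  have "(F has_real_derivative cos (c + real_of_int n * t)) (at t)" for t
    unfolding F_def using False by (auto intro!: derivative_eq_intros)
  then have "((\<lambda>t. cos (c + real_of_int n * t)) has_integral (F pi - F (-pi))) {-pi..pi}"
    by (intro fundamental_theorem_of_calculus)
      (auto simp: has_real_derivative_iff_has_vector_derivative intro: has_vector_derivative_at_within)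
  moreover have "sin (real_of_int n * pi) = 0" using sin_zero_iff_int2 by blast
  then have "F pi - F (-pi) = 0" unfolding F_def by (simp add: sin_add sin_diff diff_divide_distrib[symmetric])
  ultimately show ?thesis using False by (simp add: integral_unique)
qed simp

lemma integral_torus_cos_dotk:
  "integral torus (\<lambda>k. cos (dotk m k)) = (if m = 0 then (2 * pi)^3 else 0)"
proof -
  obtain m1 m2 m3 where m: "m = (m1, m2, m3)" by (cases m)
  have cont: "continuous_on S (\<lambda>k. cos (dotk m k))" for S
    by (rule continuous_on_subset[of UNIV]) (intro continuous_intros continuous_on_compose2[OF _ dotk_continuous], auto)
  have "integral torus (\<lambda>k. cos (dotk m k))
     = integral (cbox (-pi) pi) (\<lambda>k1. integral (cbox (-pi, -pi) (pi, pi)) (\<lambda>y. cos (dotk m (k1, y))))"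
    unfolding torus_def by (rule integral_prod_continuous[OF cont])
  also have "\<dots> = integral (cbox (-pi) pi) (\<lambda>k1. integral (cbox (-pi) pi) (\<lambda>k2. integral (cbox (-pi) pi)
          (\<lambda>k3. cos ((real_of_int m1 * k1 + real_of_int m2 * k2) + real_of_int m3 * k3))))"
  proof (rule integral_cong)
    fix k1 :: real
    have "continuous_on S (\<lambda>y. cos (dotk m (k1, y)))" for S
      by (rule continuous_on_subset[of UNIV]) (unfold dotk_def, intro continuous_intros, auto)
    then show "integral (cbox (-pi, -pi) (pi, pi)) (\<lambda>y. cos (dotk m (k1, y))) = integral (cbox (-pi) pi) (\<lambda>k2.
        integral (cbox (-pi) pi) (\<lambda>k3. cos ((real_of_int m1 * k1 + real_of_int m2 * k2) + real_of_int m3 * k3)))"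
      by (subst integral_prod_continuous) (simp_all add: m dotk_def algebra_simps)
  qed
  also have "\<dots> = (if m = 0 then (2 * pi)^3 else 0)"
  proof -
    have inner: "integral {-pi..pi} (\<lambda>k3. cos ((real_of_int m1 * k1 + real_of_int m2 * k2) + real_of_int m3 * k3))
        = (if m3 = 0 then 2 * pi * cos (real_of_int m1 * k1 + real_of_int m2 * k2) else 0)" for k1 k2
      by (rule integral_cos_affine)
    have middle: "integral {-pi..pi} (\<lambda>k2. cos (real_of_int m1 * k1 + real_of_int m2 * k2))
        = (if m2 = 0 then 2 * pi * cos (real_of_int m1 * k1) else 0)" for k1
      by (rule integral_cos_affine)
    have outer: "integral {-pi..pi} (\<lambda>k1. cos (real_of_int m1 * k1)) = (if m1 = 0 then 2 * pi else 0)"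
      using integral_cos_affine[of 0 m1] by simp
    show ?thesis unfolding cbox_interval inner
      by (cases "m3 = 0"; cases "m2 = 0") (simp_all add: m middle outer zero_prod_def power3_eq_cube)
  qed
  finally show ?thesis .
qed

lemma integral_cos_dotk_torus:
  "(\<integral>k. cos (dotk m k) * indicator torus k \<partial>lborel) = (if m = 0 then (2 * pi)^3 else 0)"
proof -
  have "continuous_on torus (\<lambda>k. cos (dotk m k))"
    by (rule continuous_on_subset[of UNIV]) (intro continuous_intros continuous_on_compose2[OF _ dotk_continuous], auto)
  then have "set_integrable lborel torus (\<lambda>k. cos (dotk m k))"
    unfolding set_integrable_def torus_def by (rule borel_integrable_compact[rotated]) simp
  then have "set_lebesgue_integral lborel torus (\<lambda>k. cos (dotk m k)) = integral torus (\<lambda>k. cos (dotk m k))"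
    by (rule set_borel_integral_eq_integral(2))
  then show ?thesis
    unfolding set_lebesgue_integral_def integral_torus_cos_dotk by (simp add: mult.commute)
qed

lemma indicator_torus_integrable: "integrable lborel (\<lambda>k. indicator torus k :: real)"
  using borel_integrable_compact[of torus "\<lambda>_. 1::real"] unfolding torus_def by simp

lemma fourier_inversion:
  assumes \<phi>: "\<phi> summable_on UNIV"
  shows "(\<integral>k. fourier_coeff cos \<phi> k * (cos (dotk x0 k) * indicator torus k)
             + fourier_coeff sin \<phi> k * (sin (dotk x0 k) * indicator torus k) \<partial>lborel) = (2 * pi)^3 * \<phi> x0"
proof -
  define T where "T k = (indicator torus k :: real)" for k
  have T: "integrable lborel T" unfolding T_def by (rule indicator_torus_integrable)
  note cos = fourier_coeff_exchange[of cos, OF _ \<phi> integrable_trig_dotk_mult[OF _ T, of cos x0]]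
  note sin = fourier_coeff_exchange[of sin, OF _ \<phi> integrable_trig_dotk_mult[OF _ T, of sin x0]]
  have orth: "(\<integral>k. cos (dotk x k) * (cos (dotk x0 k) * T k) \<partial>lborel)
      + (\<integral>k. sin (dotk x k) * (sin (dotk x0 k) * T k) \<partial>lborel) = (if x = x0 then (2 * pi)^3 else 0)" for x
  proof -
    have "(\<integral>k. cos (dotk x k) * (cos (dotk x0 k) * T k) \<partial>lborel)
        + (\<integral>k. sin (dotk x k) * (sin (dotk x0 k) * T k) \<partial>lborel)
        = (\<integral>k. cos (dotk x k) * (cos (dotk x0 k) * T k) + sin (dotk x k) * (sin (dotk x0 k) * T k) \<partial>lborel)"
      using T by (intro Bochner_Integration.integral_add[symmetric] integrable_trig_dotk_mult) auto
    also have "\<dots> = (\<integral>k. cos (dotk (x - x0) k) * T k \<partial>lborel)"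
      by (rule Bochner_Integration.integral_cong) (auto simp: dotk_diff cos_diff algebra_simps)
    finally show ?thesis unfolding T_def integral_cos_dotk_torus by simp
  qed
  have "(\<integral>k. fourier_coeff cos \<phi> k * (cos (dotk x0 k) * T k) + fourier_coeff sin \<phi> k * (sin (dotk x0 k) * T k) \<partial>lborel)
      = (\<Sum>\<^sub>\<infinity>x. \<phi> x * (\<integral>k. cos (dotk x k) * (cos (dotk x0 k) * T k) \<partial>lborel))
        + (\<Sum>\<^sub>\<infinity>x. \<phi> x * (\<integral>k. sin (dotk x k) * (sin (dotk x0 k) * T k) \<partial>lborel))"
    using cos(2,3) sin(2,3) by simp
  also have "\<dots> = (\<Sum>\<^sub>\<infinity>x. \<phi> x * (if x = x0 then (2 * pi)^3 else 0))"
    by (subst infsum_add[OF cos(1) sin(1), symmetric]) (simp_all add: distrib_left[symmetric] orth)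
  also have "\<dots> = (2 * pi)^3 * \<phi> x0"
    by (subst infsum_cong_neutral[where T = "{x0}"]) auto
  finally show ?thesis unfolding T_def .
qed

lemma fourier_coeffs_vanish_imp_zero:
  assumes \<phi>: "\<phi> summable_on UNIV"
    and vanish: "AE k in lborel. k \<in> torus \<longrightarrow> fourier_coeff cos \<phi> k = 0 \<and> fourier_coeff sin \<phi> k = 0"
  shows "\<phi> = (\<lambda>_. 0)"
proof
  fix x0
  have "(2 * pi)^3 * \<phi> x0 = (\<integral>k. fourier_coeff cos \<phi> k * (cos (dotk x0 k) * indicator torus k)
      + fourier_coeff sin \<phi> k * (sin (dotk x0 k) * indicator torus k) \<partial>lborel)"
    using fourier_inversion[OF \<phi>] by simp
  also have "\<dots> = 0"
    by (rule integral_eq_zero_AE) (use vanish in \<open>eventually_elim, auto simp: indicator_def\<close>)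
  finally show "\<phi> x0 = 0" by simp
qed

lemma Rconv_eq_fourier:
  assumes \<alpha>: "0 < \<alpha>" "\<alpha> < 3" and \<phi>: "\<phi> summable_on UNIV"
  shows "Rconv \<alpha> \<phi> x = riesz_const \<alpha> *
    ((\<integral>k. fourier_coeff cos \<phi> k * (cos (dotk x k) * riesz_weight \<alpha> k) \<partial>lborel)
     + (\<integral>k. fourier_coeff sin \<phi> k * (sin (dotk x k) * riesz_weight \<alpha> k) \<partial>lborel))"
proof -
  have W: "integrable lborel (riesz_weight \<alpha>)" using riesz_weight_integrable[OF \<alpha>] .
  note cos = fourier_coeff_exchange[of cos, OF _ \<phi> integrable_trig_dotk_mult[OF _ W, of cos x]]
  note sin = fourier_coeff_exchange[of sin, OF _ \<phi> integrable_trig_dotk_mult[OF _ W, of sin x]]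
  have kernel: "R_kernel \<alpha> x y = riesz_const \<alpha> *
      ((\<integral>k. cos (dotk y k) * (cos (dotk x k) * riesz_weight \<alpha> k) \<partial>lborel)
       + (\<integral>k. sin (dotk y k) * (sin (dotk x k) * riesz_weight \<alpha> k) \<partial>lborel))" for y
  proof -
    have "(\<integral>k. cos (dotk (x - y) k) * riesz_weight \<alpha> k \<partial>lborel)
        = (\<integral>k. cos (dotk y k) * (cos (dotk x k) * riesz_weight \<alpha> k)
             + sin (dotk y k) * (sin (dotk x k) * riesz_weight \<alpha> k) \<partial>lborel)"
      by (rule Bochner_Integration.integral_cong) (auto simp: dotk_diff cos_diff algebra_simps)
    also have "\<dots> = (\<integral>k. cos (dotk y k) * (cos (dotk x k) * riesz_weight \<alpha> k) \<partial>lborel)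
        + (\<integral>k. sin (dotk y k) * (sin (dotk x k) * riesz_weight \<alpha> k) \<partial>lborel)"
      using W by (intro Bochner_Integration.integral_add integrable_trig_dotk_mult) auto
    finally show ?thesis using R_kernel_eq_integral[OF \<alpha>] by simp
  qed
  have "Rconv \<alpha> \<phi> x = (\<Sum>\<^sub>\<infinity>y. riesz_const \<alpha> *
      (\<phi> y * (\<integral>k. cos (dotk y k) * (cos (dotk x k) * riesz_weight \<alpha> k) \<partial>lborel)
       + \<phi> y * (\<integral>k. sin (dotk y k) * (sin (dotk x k) * riesz_weight \<alpha> k) \<partial>lborel)))"
    unfolding Rconv_def by (rule infsum_cong) (simp add: kernel algebra_simps)
  also have "\<dots> = riesz_const \<alpha> *
      ((\<Sum>\<^sub>\<infinity>y. \<phi> y * (\<integral>k. cos (dotk y k) * (cos (dotk x k) * riesz_weight \<alpha> k) \<partial>lborel))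
       + (\<Sum>\<^sub>\<infinity>y. \<phi> y * (\<integral>k. sin (dotk y k) * (sin (dotk x k) * riesz_weight \<alpha> k) \<partial>lborel)))"
    by (subst infsum_cmult_right') (simp add: infsum_add[OF cos(1) sin(1)])
  finally show ?thesis using cos(3) sin(3) by simp
qed

definition riesz_pairing :: "real \<Rightarrow> (pt \<Rightarrow> real) \<Rightarrow> (pt \<Rightarrow> real) \<Rightarrow> real" where
  "riesz_pairing \<alpha> \<psi> \<phi> = (\<Sum>\<^sub>\<infinity>x. Rconv \<alpha> \<phi> x * \<psi> x)"

lemma integrable_fourier_coeff_weight:
  assumes \<alpha>: "0 < \<alpha>" "\<alpha> < 3" and c: "c \<in> {cos, sin}" and \<phi>: "\<phi> summable_on UNIV"
  shows "integrable lborel (\<lambda>k. fourier_coeff c \<phi> k * riesz_weight \<alpha> k)"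
  by (rule fourier_coeff_exchange(2)[OF c \<phi> riesz_weight_integrable[OF \<alpha>]])

lemma integrable_fourier_coeff_pair:
  assumes \<alpha>: "0 < \<alpha>" "\<alpha> < 3" and c: "c \<in> {cos, sin}"
    and \<phi>: "\<phi> summable_on UNIV" and \<psi>: "\<psi> summable_on UNIV"
  shows "integrable lborel (\<lambda>k. fourier_coeff c \<psi> k * (fourier_coeff c \<phi> k * riesz_weight \<alpha> k))"
  by (rule fourier_coeff_exchange(2)[OF c \<psi> integrable_fourier_coeff_weight[OF \<alpha> c \<phi>]])

lemma riesz_pairing_eq_fourier:
  assumes \<alpha>: "0 < \<alpha>" "\<alpha> < 3" and \<phi>: "\<phi> summable_on UNIV" and \<psi>: "\<psi> summable_on UNIV"
  shows "riesz_pairing \<alpha> \<psi> \<phi> = riesz_const \<alpha> *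
    ((\<integral>k. fourier_coeff cos \<psi> k * (fourier_coeff cos \<phi> k * riesz_weight \<alpha> k) \<partial>lborel)
     + (\<integral>k. fourier_coeff sin \<psi> k * (fourier_coeff sin \<phi> k * riesz_weight \<alpha> k) \<partial>lborel))"
proof -
  note cos = fourier_coeff_exchange[of cos, OF _ \<psi> integrable_fourier_coeff_weight[OF \<alpha> _ \<phi>, of cos]]
  note sin = fourier_coeff_exchange[of sin, OF _ \<psi> integrable_fourier_coeff_weight[OF \<alpha> _ \<phi>, of sin]]
  have "riesz_pairing \<alpha> \<psi> \<phi> = (\<Sum>\<^sub>\<infinity>x. riesz_const \<alpha> *
      (\<psi> x * (\<integral>k. cos (dotk x k) * (fourier_coeff cos \<phi> k * riesz_weight \<alpha> k) \<partial>lborel)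
       + \<psi> x * (\<integral>k. sin (dotk x k) * (fourier_coeff sin \<phi> k * riesz_weight \<alpha> k) \<partial>lborel)))"
    unfolding riesz_pairing_def by (rule infsum_cong) (simp add: Rconv_eq_fourier[OF \<alpha> \<phi>] algebra_simps)
  also have "\<dots> = riesz_const \<alpha> *
      ((\<Sum>\<^sub>\<infinity>x. \<psi> x * (\<integral>k. cos (dotk x k) * (fourier_coeff cos \<phi> k * riesz_weight \<alpha> k) \<partial>lborel))
       + (\<Sum>\<^sub>\<infinity>x. \<psi> x * (\<integral>k. sin (dotk x k) * (fourier_coeff sin \<phi> k * riesz_weight \<alpha> k) \<partial>lborel)))"
    by (subst infsum_cmult_right') (simp add: infsum_add[OF cos(1) sin(1)])
  finally show ?thesis using cos(3) sin(3) by simp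
qed

lemma riesz_pairing_sym:
  assumes \<alpha>: "0 < \<alpha>" "\<alpha> < 3" and "f summable_on UNIV" "g summable_on UNIV"
  shows "riesz_pairing \<alpha> f g = riesz_pairing \<alpha> g f"
  using assms by (simp add: riesz_pairing_eq_fourier mult_ac)

lemma integral_fourier_coeff_bilinear:
  assumes \<alpha>: "0 < \<alpha>" "\<alpha> < 3" and c: "c \<in> {cos, sin}"
    and f: "f summable_on UNIV" and g: "g summable_on UNIV"
  shows "(\<integral>k. fourier_coeff c (\<lambda>x. X * f x + Y * g x) k
             * (fourier_coeff c (\<lambda>x. X' * f x + Y' * g x) k * riesz_weight \<alpha> k) \<partial>lborel)
       = X * X' * (\<integral>k. fourier_coeff c f k * (fourier_coeff c f k * riesz_weight \<alpha> k) \<partial>lborel)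
         + X * Y' * (\<integral>k. fourier_coeff c f k * (fourier_coeff c g k * riesz_weight \<alpha> k) \<partial>lborel)
         + Y * X' * (\<integral>k. fourier_coeff c g k * (fourier_coeff c f k * riesz_weight \<alpha> k) \<partial>lborel)
         + Y * Y' * (\<integral>k. fourier_coeff c g k * (fourier_coeff c g k * riesz_weight \<alpha> k) \<partial>lborel)"
proof -
  note int = integrable_fourier_coeff_pair[OF \<alpha> c]
  have "(\<integral>k. fourier_coeff c (\<lambda>x. X * f x + Y * g x) k
             * (fourier_coeff c (\<lambda>x. X' * f x + Y' * g x) k * riesz_weight \<alpha> k) \<partial>lborel)
      = (\<integral>k. (X * X') * (fourier_coeff c f k * (fourier_coeff c f k * riesz_weight \<alpha> k))
           + (X * Y') * (fourier_coeff c f k * (fourier_coeff c g k * riesz_weight \<alpha> k))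
           + (Y * X') * (fourier_coeff c g k * (fourier_coeff c f k * riesz_weight \<alpha> k))
           + (Y * Y') * (fourier_coeff c g k * (fourier_coeff c g k * riesz_weight \<alpha> k)) \<partial>lborel)"
    by (rule Bochner_Integration.integral_cong) (auto simp: fourier_coeff_linear[OF c f g] algebra_simps)
  also have "\<dots> = X * X' * (\<integral>k. fourier_coeff c f k * (fourier_coeff c f k * riesz_weight \<alpha> k) \<partial>lborel)
         + X * Y' * (\<integral>k. fourier_coeff c f k * (fourier_coeff c g k * riesz_weight \<alpha> k) \<partial>lborel)
         + Y * X' * (\<integral>k. fourier_coeff c g k * (fourier_coeff c f k * riesz_weight \<alpha> k) \<partial>lborel)
         + Y * Y' * (\<integral>k. fourier_coeff c g k * (fourier_coeff c g k * riesz_weight \<alpha> k) \<partial>lborel)"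
    using int[OF f f] int[OF g f] int[OF f g] int[OF g g] by simp
  finally show ?thesis .
qed

lemma riesz_pairing_bilinear:
  assumes \<alpha>: "0 < \<alpha>" "\<alpha> < 3" and f: "f summable_on UNIV" and g: "g summable_on UNIV"
  shows "riesz_pairing \<alpha> (\<lambda>x. X * f x + Y * g x) (\<lambda>x. X' * f x + Y' * g x)
       = X * X' * riesz_pairing \<alpha> f f + X * Y' * riesz_pairing \<alpha> f g
         + Y * X' * riesz_pairing \<alpha> g f + Y * Y' * riesz_pairing \<alpha> g g"
proof -
  have s1: "(\<lambda>x. X * f x + Y * g x) summable_on UNIV" and s2: "(\<lambda>x. X' * f x + Y' * g x) summable_on UNIV"
    using f g by (auto intro: summable_on_add summable_on_cmult_right)
  show ?thesis
    unfolding riesz_pairing_eq_fourier[OF \<alpha> s2 s1] riesz_pairing_eq_fourier[OF \<alpha> f f]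
      riesz_pairing_eq_fourier[OF \<alpha> g f] riesz_pairing_eq_fourier[OF \<alpha> f g] riesz_pairing_eq_fourier[OF \<alpha> g g]
      integral_fourier_coeff_bilinear[OF \<alpha> _ f g, where c = cos, simplified]
      integral_fourier_coeff_bilinear[OF \<alpha> _ f g, where c = sin, simplified]
    by (simp add: algebra_simps)
qed

text \<open>If the pairing vanished, both Fourier coefficients of \<open>\<phi>\<close> would vanish almost everywhere on
  the torus, because the weight \<open>symb powr (-\<alpha>/2)\<close> is positive there away from \<open>0\<close>; Fourier
  inversion then forces \<open>\<phi> = 0\<close>.\<close>
lemma riesz_pairing_pos:
  assumes \<alpha>: "0 < \<alpha>" "\<alpha> < 3" and \<phi>: "\<phi> summable_on UNIV" and nz: "\<phi> \<noteq> (\<lambda>_. 0)"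
  shows "0 < riesz_pairing \<alpha> \<phi> \<phi>"
proof -
  define H where "H k = ((fourier_coeff cos \<phi> k)^2 + (fourier_coeff sin \<phi> k)^2) * riesz_weight \<alpha> k" for k
  have H_int: "integrable lborel H"
    using integrable_fourier_coeff_pair[OF \<alpha> _ \<phi> \<phi>, of cos] integrable_fourier_coeff_pair[OF \<alpha> _ \<phi> \<phi>, of sin]
    unfolding H_def by (simp add: power2_eq_square algebra_simps)
  have H_nonneg: "0 \<le> H k" for k unfolding H_def by (simp add: riesz_weight_nonneg)
  have pairing: "riesz_pairing \<alpha> \<phi> \<phi> = riesz_const \<alpha> * (\<integral>k. H k \<partial>lborel)"
    using integrable_fourier_coeff_pair[OF \<alpha> _ \<phi> \<phi>, of cos] integrable_fourier_coeff_pair[OF \<alpha> _ \<phi> \<phi>, of sin]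
    unfolding riesz_pairing_eq_fourier[OF \<alpha> \<phi> \<phi>] H_def
    by (subst Bochner_Integration.integral_add[symmetric]) (auto simp: power2_eq_square algebra_simps)
  have "(\<integral>k. H k \<partial>lborel) \<noteq> 0"
  proof
    assume "(\<integral>k. H k \<partial>lborel) = 0"
    then have "AE k in lborel. H k = 0"
      using integral_nonneg_eq_0_iff_AE[OF H_int] H_nonneg by simp
    moreover have "AE k in lborel. k \<noteq> (0::real \<times> real \<times> real)"
      by (rule AE_I'[of "{0}"]) (auto intro: countable_imp_null_set_lborel)
    ultimately have vanish: "AE k in lborel. k \<in> torus \<longrightarrow> fourier_coeff cos \<phi> k = 0 \<and> fourier_coeff sin \<phi> k = 0"
    proof eventually_elim
      case (elim k)
      show ?case
      proof
        assume "k \<in> torus"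
        then have "0 < riesz_weight \<alpha> k" using symb_pos[OF _ elim(2)] by (simp add: riesz_weight_def)
        then show "fourier_coeff cos \<phi> k = 0 \<and> fourier_coeff sin \<phi> k = 0"
          using elim(1) by (simp add: H_def sum_power2_eq_zero_iff)
      qed
    qed
    then have "\<phi> = (\<lambda>_. 0)" by (rule fourier_coeffs_vanish_imp_zero[OF \<phi>])
    then show False using nz by simp
  qed
  moreover have "0 \<le> (\<integral>k. H k \<partial>lborel)" using H_nonneg by simp
  ultimately show ?thesis unfolding pairing using riesz_const_pos[OF \<alpha>(1)] by simp
qed

section \<open>Discrete gradients of the positive and negative parts\<close>

definition grad_pair :: "(pt \<Rightarrow> real) \<Rightarrow> (pt \<Rightarrow> real) \<Rightarrow> pt \<Rightarrow> real" where
  "grad_pair v \<phi> x = (1/2) * (\<Sum>y\<in>nbrs x. (v y - v x) * (\<phi> y - \<phi> x))"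

lemma grad_inner_eq_infsum: "grad_inner v \<phi> = (\<Sum>\<^sub>\<infinity>x. grad_pair v \<phi> x)"
  unfolding grad_inner_def grad_pair_def ..

lemma grad_sq_nonneg: "0 \<le> grad_sq v x"
  unfolding grad_sq_def by (simp add: sum_nonneg)

lemma grad_sq_lincomb:
  "grad_sq (\<lambda>x. s * f x + t * g x) x = s^2 * grad_sq f x + 2 * s * t * grad_pair f g x + t^2 * grad_sq g x"
proof -
  have "grad_sq (\<lambda>x. s * f x + t * g x) x = (1/2) * (\<Sum>y\<in>nbrs x. s^2 * (f y - f x)^2
      + 2 * s * t * ((f y - f x) * (g y - g x)) + t^2 * (g y - g x)^2)"
    unfolding grad_sq_def by (intro arg_cong[where f = "\<lambda>z. (1/2) * z"] sum.cong) (auto simp: power2_eq_square algebra_simps)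
  then show ?thesis
    unfolding grad_sq_def grad_pair_def sum.distrib sum_distrib_left[symmetric] by (simp add: algebra_simps)
qed

lemma grad_pair_lincomb_left:
  "grad_pair (\<lambda>x. s * f x + t * g x) (\<lambda>x. s * f x) x = s^2 * grad_sq f x + s * t * grad_pair f g x"
proof -
  have "grad_pair (\<lambda>x. s * f x + t * g x) (\<lambda>x. s * f x) x
      = (1/2) * (\<Sum>y\<in>nbrs x. s^2 * (f y - f x)^2 + s * t * ((f y - f x) * (g y - g x)))"
    unfolding grad_pair_def by (intro arg_cong[where f = "\<lambda>z. (1/2) * z"] sum.cong) (auto simp: power2_eq_square algebra_simps)
  then show ?thesis
    unfolding grad_sq_def grad_pair_def sum.distrib sum_distrib_left[symmetric] by (simp add: algebra_simps)
qed

lemma grad_pair_lincomb_right: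
  "grad_pair (\<lambda>x. s * f x + t * g x) (\<lambda>x. t * g x) x = t^2 * grad_sq g x + s * t * grad_pair f g x"
proof -
  have "grad_pair (\<lambda>x. s * f x + t * g x) (\<lambda>x. t * g x) x
      = (1/2) * (\<Sum>y\<in>nbrs x. t^2 * (g y - g x)^2 + s * t * ((f y - f x) * (g y - g x)))"
    unfolding grad_pair_def by (intro arg_cong[where f = "\<lambda>z. (1/2) * z"] sum.cong) (auto simp: power2_eq_square algebra_simps)
  then show ?thesis
    unfolding grad_sq_def grad_pair_def sum.distrib sum_distrib_left[symmetric] by (simp add: algebra_simps)
qed

lemma max_zero_diff_sq_le: "(max a 0 - max b 0)^2 \<le> (a - b :: real)^2"
proof -
  have "\<bar>max a 0 - max b 0\<bar> \<le> \<bar>a - b\<bar>" by (simp add: max_def abs_if)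
  then show ?thesis by (simp add: abs_le_square_iff)
qed

lemma min_zero_diff_sq_le: "(min a 0 - min b 0)^2 \<le> (a - b :: real)^2"
proof -
  have "\<bar>min a 0 - min b 0\<bar> \<le> \<bar>a - b\<bar>" by (simp add: min_def abs_if)
  then show ?thesis by (simp add: abs_le_square_iff)
qed

lemma max_min_zero_diff_mult_bounds:
  fixes a b :: real
  shows "0 \<le> (max a 0 - max b 0) * (min a 0 - min b 0)"
    and "(max a 0 - max b 0) * (min a 0 - min b 0) \<le> (a - b)^2"
proof -
  define x y where "x = max a 0 - max b 0" and "y = min a 0 - min b 0"
  show xy: "0 \<le> (max a 0 - max b 0) * (min a 0 - min b 0)"
    by (cases "b \<le> a") (auto intro: mult_nonneg_nonneg mult_nonpos_nonpos)
  have "a - b = x + y" unfolding x_def y_def by auto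
  moreover have "x * y \<le> (x + y)^2"
    using xy unfolding x_def[symmetric] y_def[symmetric] by (simp add: power2_eq_square algebra_simps)
  ultimately show "(max a 0 - max b 0) * (min a 0 - min b 0) \<le> (a - b)^2" by (simp add: x_def y_def)
qed

lemma grad_sq_posp_le: "grad_sq (posp u) x \<le> grad_sq u x"
  unfolding grad_sq_def posp_def by (intro mult_left_mono sum_mono max_zero_diff_sq_le) auto

lemma grad_sq_negp_le: "grad_sq (negp u) x \<le> grad_sq u x"
  unfolding grad_sq_def negp_def by (intro mult_left_mono sum_mono min_zero_diff_sq_le) auto

lemma grad_pair_posp_negp_nonneg: "0 \<le> grad_pair (posp u) (negp u) x"
  unfolding grad_pair_def posp_def negp_def
  by (intro mult_nonneg_nonneg sum_nonneg max_min_zero_diff_mult_bounds(1)) auto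

lemma grad_pair_posp_negp_le: "grad_pair (posp u) (negp u) x \<le> grad_sq u x"
  unfolding grad_pair_def grad_sq_def posp_def negp_def
  by (intro mult_left_mono sum_mono max_min_zero_diff_mult_bounds(2)) auto

lemma posp_mult_negp: "posp u x * negp u x = 0"
  unfolding posp_def negp_def by (auto simp: max_def min_def)

lemma sq_posp_le: "(posp u x)^2 \<le> (u x)^2"
  unfolding posp_def by (auto simp: max_def abs_le_iff)

lemma sq_negp_le: "(negp u x)^2 \<le> (u x)^2"
  unfolding negp_def by (auto simp: min_def abs_le_iff)

lemma abs_powr_mult_self: "\<bar>z\<bar> powr (p - 2) * z * z = \<bar>z\<bar> powr (p::real)"
proof (cases "z = 0")
  case False
  then have "z * z = \<bar>z\<bar> powr 2" by (simp add: powr_numeral power2_eq_square abs_mult_self_eq)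
  then have "\<bar>z\<bar> powr (p - 2) * z * z = \<bar>z\<bar> powr (p - 2 + 2)" by (simp only: mult.assoc powr_add)
  then show ?thesis by simp
qed simp

lemma abs_mult_powr: "0 \<le> c \<Longrightarrow> \<bar>c * v\<bar> powr p = c powr p * \<bar>v\<bar> powr (p::real)"
  by (simp add: abs_mult powr_mult)

lemma max_lincomb_max_min:
  fixes s t v :: real
  assumes "0 \<le> s" "0 \<le> t"
  shows "max (s * max v 0 + t * min v 0) 0 = s * max v 0"
proof (cases "0 \<le> v")
  case True
  then have "s * max v 0 + t * min v 0 = s * v" "max v 0 = v" "0 \<le> s * v" using assms by auto
  then show ?thesis by simp
next
  case False
  then have "s * max v 0 + t * min v 0 = t * v" "max v 0 = 0" "t * v \<le> 0"
    using assms by (auto simp: mult_nonneg_nonpos)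
  then show ?thesis by simp
qed

lemma min_lincomb_max_min:
  fixes s t v :: real
  assumes "0 \<le> s" "0 \<le> t"
  shows "min (s * max v 0 + t * min v 0) 0 = t * min v 0"
proof (cases "0 \<le> v")
  case True
  then have "s * max v 0 + t * min v 0 = s * v" "min v 0 = 0" "0 \<le> s * v" using assms by auto
  then show ?thesis by simp
next
  case False
  then have "s * max v 0 + t * min v 0 = t * v" "min v 0 = v" "t * v \<le> 0"
    using assms by (auto simp: mult_nonneg_nonpos)
  then show ?thesis by simp
qed

lemma abs_powr_lincomb_max_min:
  fixes s t v p :: real
  assumes "0 \<le> s" "0 \<le> t"
  shows "\<bar>s * max v 0 + t * min v 0\<bar> powr p = s powr p * \<bar>max v 0\<bar> powr p + t powr p * \<bar>min v 0\<bar> powr p"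
proof (cases "0 \<le> v")
  case True
  then have "s * max v 0 + t * min v 0 = s * v" "max v 0 = v" "min v 0 = 0" by auto
  then show ?thesis using abs_mult_powr[OF assms(1), of v p] by simp
next
  case False
  then have "s * max v 0 + t * min v 0 = t * v" "max v 0 = 0" "min v 0 = v" by auto
  then show ?thesis using abs_mult_powr[OF assms(2), of v p] by simp
qed

lemma nehari_term_max:
  fixes s t v p :: real
  assumes "0 \<le> s" "0 \<le> t"
  shows "\<bar>s * max v 0 + t * min v 0\<bar> powr (p - 2) * (s * max v 0 + t * min v 0) * (s * max v 0)
       = s powr p * \<bar>max v 0\<bar> powr p"
proof (cases "0 \<le> v")
  case True
  then have "max v 0 = v" "min v 0 = 0" by auto
  then show ?thesis using abs_powr_mult_self[of "s * v" p] abs_mult_powr[OF assms(1), of v p] by simp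
qed simp

lemma nehari_term_min:
  fixes s t v p :: real
  assumes "0 \<le> s" "0 \<le> t"
  shows "\<bar>s * max v 0 + t * min v 0\<bar> powr (p - 2) * (s * max v 0 + t * min v 0) * (t * min v 0)
       = t powr p * \<bar>min v 0\<bar> powr p"
proof (cases "0 \<le> v")
  case False
  then have "max v 0 = 0" "min v 0 = v" by auto
  then show ?thesis using abs_powr_mult_self[of "t * v" p] abs_mult_powr[OF assms(2), of v p] by simp
qed simp

lemma abs_powr_le_sq:
  fixes p v B :: real
  assumes "2 \<le> p" "\<bar>v\<bar> \<le> B"
  shows "\<bar>v\<bar> powr p \<le> B powr (p - 2) * v^2"
proof -
  have "\<bar>v\<bar> powr p = \<bar>v\<bar> powr (p - 2) * v^2"
    using abs_powr_mult_self[of v p] by (simp add: power2_eq_square mult.assoc)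
  also have "\<dots> \<le> B powr (p - 2) * v^2" using assms by (intro mult_right_mono powr_mono2) auto
  finally show ?thesis .
qed

section \<open>Reduction to the fibering map\<close>

locale sign_changing =
  fixes a b \<alpha> p h0 :: real and h u :: "pt \<Rightarrow> real"
  assumes a: "0 < a" and b: "0 < b" and \<alpha>: "0 < \<alpha>" "\<alpha> < 3" and p: "4 < p"
    and h0: "0 < h0" and h_ge: "\<forall>x. h0 \<le> h x"
    and u: "u \<in> Hsp h" and pos_nz: "posp u \<noteq> (\<lambda>_. 0)" and neg_nz: "negp u \<noteq> (\<lambda>_. 0)"
begin

abbreviation "up \<equiv> posp u"
abbreviation "un \<equiv> negp u"

definition W :: "real \<Rightarrow> real \<Rightarrow> pt \<Rightarrow> real" where
  "W s t = (\<lambda>x. s * up x + t * un x)"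

definition "fp = (\<lambda>x. \<bar>up x\<bar> powr p)"
definition "fn = (\<lambda>x. \<bar>un x\<bar> powr p)"

lemma h_nonneg: "0 \<le> h x"
  using h_ge h0 by (meson less_eq_real_def order_trans)

lemma summable_parts:
  shows "grad_sq up summable_on UNIV" "grad_sq un summable_on UNIV" "grad_pair up un summable_on UNIV"
    and "(\<lambda>x. (up x)^2) summable_on UNIV" "(\<lambda>x. (un x)^2) summable_on UNIV"
    and "(\<lambda>x. h x * (up x)^2) summable_on UNIV" "(\<lambda>x. h x * (un x)^2) summable_on UNIV"
proof -
  have H1: "(\<lambda>x. grad_sq u x + (u x)^2) summable_on UNIV" and hu: "(\<lambda>x. h x * (u x)^2) summable_on UNIV"
    using u by (simp_all add: Hsp_def H1_def)
  have gu: "grad_sq u summable_on UNIV" and u2: "(\<lambda>x. (u x)^2) summable_on UNIV"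
    by (rule summable_on_nonneg_le[OF H1]; simp add: grad_sq_nonneg)+
  show "grad_sq up summable_on UNIV" "grad_sq un summable_on UNIV" "grad_pair up un summable_on UNIV"
    by (rule summable_on_nonneg_le[OF gu];
        simp add: grad_sq_nonneg grad_sq_posp_le grad_sq_negp_le grad_pair_posp_negp_nonneg grad_pair_posp_negp_le)+
  show "(\<lambda>x. (up x)^2) summable_on UNIV" "(\<lambda>x. (un x)^2) summable_on UNIV"
    by (rule summable_on_nonneg_le[OF u2]; simp add: sq_posp_le sq_negp_le)+
  show "(\<lambda>x. h x * (up x)^2) summable_on UNIV" "(\<lambda>x. h x * (un x)^2) summable_on UNIV"
    by (rule summable_on_nonneg_le[OF hu];
        simp add: h_nonneg sq_posp_le sq_negp_le mult_left_mono)+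
qed

lemma summable_fp: "fp summable_on UNIV" and summable_fn: "fn summable_on UNIV"
proof -
  define B where "B = sqrt (\<Sum>\<^sub>\<infinity>x. (u x)^2)"
  have "(\<lambda>x. (u x)^2) summable_on UNIV"
    using u summable_on_nonneg_le[of "\<lambda>x. grad_sq u x + (u x)^2"] by (simp add: Hsp_def H1_def grad_sq_nonneg)
  then have u_le: "\<bar>u x\<bar> \<le> B" for x unfolding B_def by (rule abs_le_sqrt_infsum_sq)
  then have "0 \<le> B" by (meson abs_ge_zero order_trans)
  then have bounds: "\<bar>up x\<bar> \<le> B" "\<bar>un x\<bar> \<le> B" for x
    using u_le[of x] unfolding posp_def negp_def by (auto simp: max_def min_def)
  have "2 \<le> p" using p by simp
  then have le: "fp x \<le> B powr (p - 2) * (up x)^2" "fn x \<le> B powr (p - 2) * (un x)^2" for x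
    unfolding fp_def fn_def using bounds[of x] by (simp_all add: abs_powr_le_sq)
  show "fp summable_on UNIV"
    by (rule summable_on_nonneg_le[OF summable_on_cmult_right[OF summable_parts(4)] _ le(1)]) (simp add: fp_def)
  show "fn summable_on UNIV"
    by (rule summable_on_nonneg_le[OF summable_on_cmult_right[OF summable_parts(5)] _ le(2)]) (simp add: fn_def)
qed

definition "grad_pp = (\<Sum>\<^sub>\<infinity>x. grad_sq up x)"
definition "grad_pn = (\<Sum>\<^sub>\<infinity>x. grad_pair up un x)"
definition "grad_nn = (\<Sum>\<^sub>\<infinity>x. grad_sq un x)"
definition "mass_p = (\<Sum>\<^sub>\<infinity>x. h x * (up x)^2)"
definition "mass_n = (\<Sum>\<^sub>\<infinity>x. h x * (un x)^2)"
definition "riesz_pp = riesz_pairing \<alpha> fp fp"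
definition "riesz_pn = riesz_pairing \<alpha> fp fn"
definition "riesz_nn = riesz_pairing \<alpha> fn fn"

abbreviation "J \<equiv> fibre_J a b p grad_pp grad_pn grad_nn mass_p mass_n riesz_pp riesz_pn riesz_nn"

lemma posp_W: "0 \<le> s \<Longrightarrow> 0 \<le> t \<Longrightarrow> posp (W s t) = (\<lambda>x. s * up x)"
  unfolding W_def posp_def negp_def by (rule ext) (rule max_lincomb_max_min)

lemma negp_W: "0 \<le> s \<Longrightarrow> 0 \<le> t \<Longrightarrow> negp (W s t) = (\<lambda>x. t * un x)"
  unfolding W_def posp_def negp_def by (rule ext) (rule min_lincomb_max_min)

lemma sq_W: "(W s t x)^2 = s^2 * (up x)^2 + t^2 * (un x)^2"
  using posp_mult_negp[of u x] unfolding W_def by (simp add: power2_eq_square algebra_simps)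

lemma grad_sq_W: "grad_sq (W s t) x = s^2 * grad_sq up x + 2 * s * t * grad_pair up un x + t^2 * grad_sq un x"
  unfolding W_def by (rule grad_sq_lincomb)

lemma sum_grad_sq_W: "(\<Sum>\<^sub>\<infinity>x. grad_sq (W s t) x) = qform grad_pp grad_pn grad_nn s t"
  unfolding grad_sq_W infsum_lincomb3(2)[OF summable_parts(1,3,2)]
  by (simp add: qform_def grad_pp_def grad_pn_def grad_nn_def algebra_simps)

lemma W_in_Hsp: "W s t \<in> Hsp h"
proof -
  have grad: "(\<lambda>x. s^2 * grad_sq up x + (2 * s * t) * grad_pair up un x + t^2 * grad_sq un x) summable_on UNIV"
    by (rule infsum_lincomb3(1)[OF summable_parts(1,3,2)])
  have sq: "(\<lambda>x. s^2 * (up x)^2 + t^2 * (un x)^2) summable_on UNIV"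
    using summable_parts(4,5) by (intro summable_on_add summable_on_cmult_right)
  have hsq: "(\<lambda>x. s^2 * (h x * (up x)^2) + t^2 * (h x * (un x)^2)) summable_on UNIV"
    using summable_parts(6,7) by (intro summable_on_add summable_on_cmult_right)
  have "(\<lambda>x. grad_sq (W s t) x + (W s t x)^2) = (\<lambda>x. (s^2 * grad_sq up x + (2 * s * t) * grad_pair up un x
      + t^2 * grad_sq un x) + (s^2 * (up x)^2 + t^2 * (un x)^2))"
    by (simp add: grad_sq_W sq_W)
  moreover have "(\<lambda>x. h x * (W s t x)^2) = (\<lambda>x. s^2 * (h x * (up x)^2) + t^2 * (h x * (un x)^2))"
    by (simp add: sq_W algebra_simps)
  ultimately show ?thesis
    using summable_on_add[OF grad sq] hsq unfolding Hsp_def H1_def by simp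
qed

lemma Hnorm_sq_W: "Hnorm_sq a h (W s t) = a * qform grad_pp grad_pn grad_nn s t + mass_p * s^2 + mass_n * t^2"
proof -
  have grad: "(\<lambda>x. s^2 * grad_sq up x + (2 * s * t) * grad_pair up un x + t^2 * grad_sq un x) summable_on UNIV"
    by (rule infsum_lincomb3(1)[OF summable_parts(1,3,2)])
  have "Hnorm_sq a h (W s t) = (\<Sum>\<^sub>\<infinity>x. a * (s^2 * grad_sq up x + (2 * s * t) * grad_pair up un x + t^2 * grad_sq un x)
      + (s^2 * (h x * (up x)^2) + t^2 * (h x * (un x)^2)))"
    unfolding Hnorm_sq_def grad_sq_W sq_W by (simp add: algebra_simps)
  also have "\<dots> = a * (\<Sum>\<^sub>\<infinity>x. s^2 * grad_sq up x + (2 * s * t) * grad_pair up un x + t^2 * grad_sq un x)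
      + (s^2 * mass_p + t^2 * mass_n)"
    using grad summable_parts(6,7) unfolding mass_p_def mass_n_def
    by (simp add: infsum_add infsum_cmult_right' summable_on_add summable_on_cmult_right)
  finally show ?thesis
    using sum_grad_sq_W[of s t] unfolding grad_sq_W by (simp add: algebra_simps)
qed

lemma riesz_pairing_fp_fn:
  "riesz_pairing \<alpha> (\<lambda>x. X * fp x + Y * fn x) (\<lambda>x. X' * fp x + Y' * fn x)
     = X * X' * riesz_pp + (X * Y' + Y * X') * riesz_pn + Y * Y' * riesz_nn"
  unfolding riesz_pairing_bilinear[OF \<alpha> summable_fp summable_fn] riesz_pp_def riesz_pn_def riesz_nn_def
    riesz_pairing_sym[OF \<alpha> summable_fn summable_fp]
  by (simp add: algebra_simps)

lemma abs_powr_W: "0 \<le> s \<Longrightarrow> 0 \<le> t \<Longrightarrow> \<bar>W s t x\<bar> powr p = s powr p * fp x + t powr p * fn x"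
  unfolding W_def fp_def fn_def posp_def negp_def by (rule abs_powr_lincomb_max_min)

lemma Jfun_W:
  assumes "0 \<le> s" "0 \<le> t"
  shows "Jfun a b h \<alpha> p (W s t) = J s t"
proof -
  have "(\<Sum>\<^sub>\<infinity>x. Rconv \<alpha> (\<lambda>y. \<bar>W s t y\<bar> powr p) x * \<bar>W s t x\<bar> powr p)
      = riesz_pairing \<alpha> (\<lambda>x. s powr p * fp x + t powr p * fn x) (\<lambda>x. s powr p * fp x + t powr p * fn x)"
    unfolding riesz_pairing_def abs_powr_W[OF assms] ..
  also have "\<dots> = qform riesz_pp riesz_pn riesz_nn (s powr p) (t powr p)"
    unfolding riesz_pairing_fp_fn qform_def by (simp add: power2_eq_square algebra_simps)
  finally show ?thesis
    unfolding Jfun_def fibre_J_def Hnorm_sq_W sum_grad_sq_W by simp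
qed

lemma Jder_W_pos:
  assumes "0 \<le> s" "0 \<le> t"
  shows "Jder a b h \<alpha> p (W s t) (posp (W s t))
       = fibre_nehari a b p grad_pp grad_pn grad_nn mass_p mass_n riesz_pp riesz_pn riesz_nn s t"
proof -
  note pos = posp_W[OF assms]
  have "grad_inner (W s t) (\<lambda>x. s * up x)
      = (\<Sum>\<^sub>\<infinity>x. s^2 * grad_sq up x + (s * t) * grad_pair up un x + 0 * grad_sq un x)"
    unfolding grad_inner_eq_infsum W_def by (rule infsum_cong) (simp add: grad_pair_lincomb_left)
  also have "\<dots> = grad_pp * s^2 + grad_pn * (s * t)"
    unfolding infsum_lincomb3(2)[OF summable_parts(1,3,2)] grad_pp_def grad_pn_def by (simp add: mult.commute)
  finally have grad: "grad_inner (W s t) (\<lambda>x. s * up x) = grad_pp * s^2 + grad_pn * (s * t)" .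
  have mass: "(\<Sum>\<^sub>\<infinity>x. h x * W s t x * (s * up x)) = mass_p * s^2"
  proof -
    have "(\<lambda>x. h x * W s t x * (s * up x)) = (\<lambda>x. s^2 * (h x * (up x)^2))"
      using posp_mult_negp[of u] unfolding W_def by (intro ext) (simp add: power2_eq_square algebra_simps)
    then show ?thesis unfolding mass_p_def by (simp add: infsum_cmult_right' mult.commute)
  qed
  have nonlin: "(\<Sum>\<^sub>\<infinity>x. Rconv \<alpha> (\<lambda>y. \<bar>W s t y\<bar> powr p) x * \<bar>W s t x\<bar> powr (p - 2) * W s t x * (s * up x))
      = riesz_pp * (s powr p)^2 + riesz_pn * (s powr p * t powr p)"
  proof -
    have "\<bar>W s t x\<bar> powr (p - 2) * W s t x * (s * up x) = s powr p * fp x + 0 * fn x" for x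
      unfolding W_def fp_def posp_def negp_def using nehari_term_max[OF assms] by simp
    then have "(\<Sum>\<^sub>\<infinity>x. Rconv \<alpha> (\<lambda>y. \<bar>W s t y\<bar> powr p) x * \<bar>W s t x\<bar> powr (p - 2) * W s t x * (s * up x))
        = riesz_pairing \<alpha> (\<lambda>x. s powr p * fp x + 0 * fn x) (\<lambda>x. s powr p * fp x + t powr p * fn x)"
      unfolding riesz_pairing_def abs_powr_W[OF assms] by (simp add: mult.assoc)
    then show ?thesis unfolding riesz_pairing_fp_fn by (simp add: power2_eq_square algebra_simps)
  qed
  show ?thesis
    unfolding Jder_def pos grad mass nonlin sum_grad_sq_W fibre_nehari_def by (simp add: algebra_simps)
qed

lemma Jder_W_neg:
  assumes "0 \<le> s" "0 \<le> t"
  shows "Jder a b h \<alpha> p (W s t) (negp (W s t))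
       = fibre_nehari a b p grad_nn grad_pn grad_pp mass_n mass_p riesz_nn riesz_pn riesz_pp t s"
proof -
  note neg = negp_W[OF assms]
  have "grad_inner (W s t) (\<lambda>x. t * un x)
      = (\<Sum>\<^sub>\<infinity>x. 0 * grad_sq up x + (s * t) * grad_pair up un x + t^2 * grad_sq un x)"
    unfolding grad_inner_eq_infsum W_def by (rule infsum_cong) (simp add: grad_pair_lincomb_right)
  also have "\<dots> = grad_nn * t^2 + grad_pn * (t * s)"
    unfolding infsum_lincomb3(2)[OF summable_parts(1,3,2)] grad_nn_def grad_pn_def by (simp add: mult.commute)
  finally have grad: "grad_inner (W s t) (\<lambda>x. t * un x) = grad_nn * t^2 + grad_pn * (t * s)" .
  have mass: "(\<Sum>\<^sub>\<infinity>x. h x * W s t x * (t * un x)) = mass_n * t^2"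
  proof -
    have "(\<lambda>x. h x * W s t x * (t * un x)) = (\<lambda>x. t^2 * (h x * (un x)^2))"
      using posp_mult_negp[of u] unfolding W_def by (intro ext) (simp add: power2_eq_square algebra_simps)
    then show ?thesis unfolding mass_n_def by (simp add: infsum_cmult_right' mult.commute)
  qed
  have nonlin: "(\<Sum>\<^sub>\<infinity>x. Rconv \<alpha> (\<lambda>y. \<bar>W s t y\<bar> powr p) x * \<bar>W s t x\<bar> powr (p - 2) * W s t x * (t * un x))
      = riesz_nn * (t powr p)^2 + riesz_pn * (t powr p * s powr p)"
  proof -
    have "\<bar>W s t x\<bar> powr (p - 2) * W s t x * (t * un x) = 0 * fp x + t powr p * fn x" for x
      unfolding W_def fn_def posp_def negp_def using nehari_term_min[OF assms] by simp
    then have "(\<Sum>\<^sub>\<infinity>x. Rconv \<alpha> (\<lambda>y. \<bar>W s t y\<bar> powr p) x * \<bar>W s t x\<bar> powr (p - 2) * W s t x * (t * un x))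
        = riesz_pairing \<alpha> (\<lambda>x. 0 * fp x + t powr p * fn x) (\<lambda>x. s powr p * fp x + t powr p * fn x)"
      unfolding riesz_pairing_def abs_powr_W[OF assms] by (simp add: mult.assoc)
    then show ?thesis unfolding riesz_pairing_fp_fn by (simp add: power2_eq_square algebra_simps)
  qed
  show ?thesis
    unfolding Jder_def neg grad mass nonlin sum_grad_sq_W fibre_nehari_def qform_swap[of grad_pp]
    by (simp add: algebra_simps)
qed

lemma exists_posp_nz: "\<exists>x. up x \<noteq> 0" and exists_negp_nz: "\<exists>x. un x \<noteq> 0"
  using pos_nz neg_nz by auto

lemma mass_p_pos: "0 < mass_p" and mass_n_pos: "0 < mass_n"
proof -
  have pos: "0 < h x * v^2" if "v \<noteq> 0" for x v
    using that h_ge h0 by (metis less_le_trans mult_pos_pos zero_less_power2)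
  have le: "h x * v^2 \<le> infsum (\<lambda>y. h y * (w y)^2) UNIV"
    if "(\<lambda>y. h y * (w y)^2) summable_on UNIV" "v = w x" for x v and w :: "pt \<Rightarrow> real"
  proof -
    have "infsum (\<lambda>y. h y * (w y)^2) {x} \<le> infsum (\<lambda>y. h y * (w y)^2) UNIV"
      using that h_nonneg by (intro infsum_mono_neutral) auto
    then show ?thesis using that by simp
  qed
  obtain x1 x2 where "up x1 \<noteq> 0" "un x2 \<noteq> 0" using exists_posp_nz exists_negp_nz by blast
  then show "0 < mass_p" "0 < mass_n"
    unfolding mass_p_def mass_n_def
    using pos le[OF summable_parts(6) refl] le[OF summable_parts(7) refl] by (meson less_le_trans)+
qed

lemma riesz_pp_pos: "0 < riesz_pp" and riesz_nn_pos: "0 < riesz_nn"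
proof -
  have "fp \<noteq> (\<lambda>_. 0)" "fn \<noteq> (\<lambda>_. 0)"
    using exists_posp_nz exists_negp_nz unfolding fp_def fn_def by (metis abs_zero powr_eq_0_iff zero_less_abs_iff)+
  then show "0 < riesz_pp" "0 < riesz_nn"
    unfolding riesz_pp_def riesz_nn_def using riesz_pairing_pos[OF \<alpha>] summable_fp summable_fn by blast+
qed

text \<open>Cauchy-Schwarz for the positive definite pairing, strict since \<open>fp\<close> and \<open>fn\<close> have disjoint
  supports: apply positivity to \<open>riesz_pn fp - riesz_pp fn\<close>.\<close>
lemma riesz_pn_sq_lt: "riesz_pn * riesz_pn < riesz_pp * riesz_nn"
proof -
  define \<phi> where "\<phi> = (\<lambda>x. riesz_pn * fp x + (- riesz_pp) * fn x)"
  have "\<phi> summable_on UNIV"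
    unfolding \<phi>_def using summable_fp summable_fn by (intro summable_on_add summable_on_cmult_right)
  moreover have "\<phi> \<noteq> (\<lambda>_. 0)"
  proof -
    obtain x where x: "un x \<noteq> 0" using exists_negp_nz by blast
    then have "up x = 0" using posp_mult_negp[of u x] by simp
    then have "\<phi> x = - riesz_pp * fn x" unfolding \<phi>_def fp_def by simp
    moreover have "fn x \<noteq> 0" using x unfolding fn_def by simp
    ultimately show ?thesis using riesz_pp_pos by (metis mult_eq_0_iff neg_equal_0_iff_equal less_irrefl)
  qed
  ultimately have "0 < riesz_pairing \<alpha> \<phi> \<phi>" by (rule riesz_pairing_pos[OF \<alpha>])
  also have "riesz_pairing \<alpha> \<phi> \<phi> = riesz_pp * (riesz_pp * riesz_nn - riesz_pn * riesz_pn)"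
    unfolding \<phi>_def riesz_pairing_fp_fn by (simp add: algebra_simps)
  finally show ?thesis using riesz_pp_pos by (simp add: zero_less_mult_iff)
qed

lemma fibre_instance: "fibre a b p grad_pp grad_pn grad_nn mass_p mass_n riesz_pp riesz_pn riesz_nn"
proof
  show "0 \<le> grad_pp" "0 \<le> grad_pn" "0 \<le> grad_nn"
    unfolding grad_pp_def grad_pn_def grad_nn_def
    by (intro infsum_nonneg; simp add: grad_sq_nonneg grad_pair_posp_negp_nonneg)+
qed (use a b p mass_p_pos mass_n_pos riesz_pp_pos riesz_nn_pos riesz_pn_sq_lt in auto)

lemma posp_W_nz: "0 < s \<Longrightarrow> 0 < t \<Longrightarrow> posp (W s t) \<noteq> (\<lambda>_. 0)"
  and negp_W_nz: "0 < s \<Longrightarrow> 0 < t \<Longrightarrow> negp (W s t) \<noteq> (\<lambda>_. 0)"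
  using pos_nz neg_nz
  by (auto simp: posp_W negp_W fun_eq_iff)

lemma W_in_Nehari_iff:
  assumes "0 < s" "0 < t"
  shows "W s t \<in> Nehari_sc a b h \<alpha> p \<longleftrightarrow>
    fibre_nehari a b p grad_pp grad_pn grad_nn mass_p mass_n riesz_pp riesz_pn riesz_nn s t = 0
    \<and> fibre_nehari a b p grad_nn grad_pn grad_pp mass_n mass_p riesz_nn riesz_pn riesz_pp t s = 0"
  using assms W_in_Hsp posp_W_nz negp_W_nz Jder_W_pos Jder_W_neg
  unfolding Nehari_sc_def by (simp add: less_imp_le)

end

theorem lemma4p1:
  fixes a b \<alpha> p h0 :: real and h u :: "pt \<Rightarrow> real"
  assumes "a > 0" and "b > 0" and "0 < \<alpha>" and "\<alpha> < 3" and "p > 4"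
    and "h0 > 0" and "\<forall>x. h x \<ge> h0"
    and "u \<in> Hsp h" and "posp u \<noteq> (\<lambda>_. 0)" and "negp u \<noteq> (\<lambda>_. 0)"
  shows "\<exists>!(s, t). s > 0 \<and> t > 0
           \<and> (\<lambda>x. s * posp u x + t * negp u x) \<in> Nehari_sc a b h \<alpha> p
           \<and> (\<forall>s' t'. s' \<ge> 0 \<longrightarrow> t' \<ge> 0 \<longrightarrow>
                Jfun a b h \<alpha> p (\<lambda>x. s' * posp u x + t' * negp u x)
                \<le> Jfun a b h \<alpha> p (\<lambda>x. s * posp u x + t * negp u x))"
proof -
  interpret sign_changing a b \<alpha> p h0 h u
    using assms by unfold_locales auto
  interpret fibre a b p grad_pp grad_pn grad_nn mass_p mass_n riesz_pp riesz_pn riesz_nn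
    by (rule fibre_instance)
  have W: "(\<lambda>x. s * posp u x + t * negp u x) = W s t" for s t
    unfolding W_def ..
  have "(0 < s \<and> 0 < t \<and> W s t \<in> Nehari_sc a b h \<alpha> p
         \<and> (\<forall>s' t'. 0 \<le> s' \<longrightarrow> 0 \<le> t' \<longrightarrow> Jfun a b h \<alpha> p (W s' t') \<le> Jfun a b h \<alpha> p (W s t)))
      \<longleftrightarrow> (0 < s \<and> 0 < t
         \<and> fibre_nehari a b p grad_pp grad_pn grad_nn mass_p mass_n riesz_pp riesz_pn riesz_nn s t = 0
         \<and> fibre_nehari a b p grad_nn grad_pn grad_pp mass_n mass_p riesz_nn riesz_pn riesz_pp t s = 0
         \<and> (\<forall>s' t'. 0 \<le> s' \<longrightarrow> 0 \<le> t' \<longrightarrow> J s' t' \<le> J s t))" for s t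
    using W_in_Nehari_iff[of s t] Jfun_W by (auto simp: less_imp_le)
  then show ?thesis
    unfolding W using fibre_J_unique_max by simp
qed

end
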